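(* Let $\mathfrak g$ be of type $D_4$ and take $s=-1$, writing $\Pi=\Pi_{-1}$. For all $X\in\mathfrak g$, $Y\in V^-$ and $\bar n\in\bar N_0$, $$[\Pi(X),R(Y)]_{\bar n}=R\big([\mathrm{Ad}(\bar n^{-1})X,Y]_{V^-}\big)_{\bar n}-d\chi\big([\mathrm{Ad}(\bar n^{-1})X,Y]_{\mathfrak l}\big),$$ where $D_{\bar n}$ denotes the linear functional $f\mapsto (Df)(\bar n)$ on $C^\infty(\bar N_0)$, the scalar $d\chi(\cdot)$ on the right acts as the functional $f\mapsto d\chi(\cdot)f(\bar n)$, and $W_{V^-}$, $W_{\mathfrak l}$ denote the components of $W\in\mathfrak g$ in $V^-$ and $\mathfrak l$.
   Context: Let $\mathfrak g$ be a complex simple, simply laced Lie algebra with Cartan subalgebra $\mathfrak h$, roots $\Delta$, a positive system, highest root $\gamma$, and $H_\gamma\in\mathfrak h$ the coroot of $\gamma$. The eigenspace decomposition of $\mathrm{ad}(H_\gamma)$ is $\mathfrak g=\mathfrak g_{-\gamma}\oplus V^-\oplus\mathfrak l\oplus V^+\oplus\mathfrak g_\gamma$ (eigenvalues $-2,\dots,2$); $\mathfrak q=\mathfrak l\oplus\mathfrak n$ with $\mathfrak n=V^+\oplus\mathfrak g_\gamma$ is the Heisenberg parabolic, $\bar{\mathfrak n}=V^-\oplus\mathfrak g_{-\gamma}$. Let $X_\gamma$ span $\mathfrak g_\gamma$. Let $G_0$ be a connected real semisimple Lie group with Lie algebra $\mathfrak g_0$, $\mathfrak g_0\otimes\mathbb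 C=\mathfrak g$, and $Q_0=L_0N_0$ a parabolic subgroup whose Lie algebras complexify to $\mathfrak q,\mathfrak l,\mathfrak n$; $\bar N_0$ is the opposite nilpotent subgroup. Let $\chi$ be the real character of $L_0$ with $\mathrm{Ad}(l)X_\gamma=\chi(l)X_\gamma$ ($d\chi=\gamma$ on $\mathfrak h$), with $d\chi$ regarded as a linear form on $\mathfrak q$ vanishing on $\mathfrak n$. For $Y\in\mathfrak g$ write $Y=Y_{\bar{\mathfrak n}}+Y_{\mathfrak q}$ according to $\mathfrak g=\bar{\mathfrak n}\oplus\mathfrak q$. For $s\in\mathbb C$, $\mathcal L_{-s}$ is the trivial line bundle over $\bar N_0$ with sections $C^\infty(\bar N_0)$. $R(X)$ for $X\in\bar{\mathfrak n}_0$ is $(R(X)f)(\bar n)=\frac{d}{dt}f(\bar n\exp(tX))|_{t=0}$, extended $\mathbb C$-linearly and to $\mathcal U(\bar{\mathfrak n})$. $\Pi_s(Y)$ for $Y\in\mathfrak g$ is $(\Pi_s(Y)f)(\bar n)=-s\,d\chi((\mathrm{Ad}(\bar n^{-1})Y)_{\mathfrak q})f(\bar n)-(R((\mathrm{Ad}(\bar n^{-1})Y)_{\bar{\mathfrak n}})f)(\bar n)$. *)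

theory Defs
  imports "HOL-Analysis.Analysis"
begin

text \<open>Concrete model of the simple Lie algebra of type D4: so(8,C) realised as
  8x8 complex matrices A with A^T J + J A = 0, J the antidiagonal matrix
  (indices 0..7). Cartan subalgebra: diagonal matrices diag(a1,a2,a3,a4,-a4,-a3,-a2,-a1);
  standard positive system e_i +- e_j (i<j); highest root gamma = e1+e2.\<close>

type_synonym cmat = "complex^8^8"

definition cscale :: "complex \<Rightarrow> cmat \<Rightarrow> cmat" where
  "cscale c M = (\<chi> i j. c * M$i$j)"

definition bracket :: "cmat \<Rightarrow> cmat \<Rightarrow> cmat" where
  "bracket A B = A ** B - B ** A"

definition Jform :: cmat where
  "Jform = (\<chi> i j. if j = 7 - i then 1 else 0)"

definition so8 :: "cmat set" where
  "so8 = {A. transpose A ** Jform + Jform ** A = 0}"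

definition Hg :: cmat where
  "Hg = (\<chi> i j. if i = j then (if i = 0 \<or> i = 1 then 1 else if i = 6 \<or> i = 7 then -1 else 0) else 0)"

definition Xg :: cmat where
  "Xg = (\<chi> i j. if i = 0 \<and> j = 6 then 1 else if i = 1 \<and> j = 7 then -1 else 0)"

text \<open>Component of W in the eigenspace of ad(H_gamma) for eigenvalue k
  (H_gamma diagonal, so ad(H_gamma) acts entrywise by Hg_ii - Hg_jj).\<close>
definition comp :: "complex \<Rightarrow> cmat \<Rightarrow> cmat" where
  "comp k W = (\<chi> i j. if Hg$i$i - Hg$j$j = k then W$i$j else 0)"

definition Vminus :: "cmat set" where "Vminus = {W \<in> so8. comp (-1) W = W}"
definition lalg :: "cmat set" where "lalg = {W \<in> so8. comp 0 W = W}"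
definition nalg :: "cmat set" where "nalg = {W \<in> so8. comp 1 W + comp 2 W = W}"
definition nbar :: "cmat set" where "nbar = {W \<in> so8. comp (-2) W + comp (-1) W = W}"
definition qalg :: "cmat set" where "qalg = {W \<in> so8. comp 0 W + comp 1 W + comp 2 W = W}"

definition nbar_part :: "cmat \<Rightarrow> cmat" where "nbar_part W = comp (-2) W + comp (-1) W"
definition q_part :: "cmat \<Rightarrow> cmat" where "q_part W = comp 0 W + comp 1 W + comp 2 W"

definition dchi :: "cmat \<Rightarrow> complex" where
  "dchi W = (THE c. bracket (comp 0 W) Xg = cscale c Xg)"

fun matpow :: "cmat \<Rightarrow> nat \<Rightarrow> cmat" where
  "matpow X 0 = mat 1"
| "matpow X (Suc k) = X ** matpow X k"

definition mexp :: "cmat \<Rightarrow> cmat" where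
  "mexp X = (\<Sum>k. inverse (fact k) *\<^sub>R matpow X k)"

text \<open>A real form g0 of g in which q, l, n (and hence nbar) are defined over R.\<close>
definition complexifies :: "cmat set \<Rightarrow> cmat set \<Rightarrow> bool" where
  "complexifies g0 S \<longleftrightarrow> (\<forall>Y\<in>S. \<exists>A\<in>S \<inter> g0. \<exists>B\<in>S \<inter> g0. Y = A + cscale \<i> B)"

definition heis_real_form :: "cmat set \<Rightarrow> bool" where
  "heis_real_form g0 \<longleftrightarrow>
     g0 \<subseteq> so8 \<and> subspace g0 \<and> (\<forall>A\<in>g0. \<forall>B\<in>g0. bracket A B \<in> g0) \<and>
     (\<forall>A\<in>g0. cscale \<i> A \<in> g0 \<longrightarrow> A = 0) \<and> complexifies g0 so8 \<and>
     complexifies g0 qalg \<and> complexifies g0 lalg \<and> complexifies g0 nalg \<and>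
     complexifies g0 nbar"

definition Nbar0 :: "cmat set \<Rightarrow> cmat set" where
  "Nbar0 g0 = mexp ` (nbar \<inter> g0)"

definition re0 :: "cmat set \<Rightarrow> cmat \<Rightarrow> cmat" where
  "re0 g0 Y = (SOME A. A \<in> g0 \<and> (\<exists>B\<in>g0. Y = A + cscale \<i> B))"
definition im0 :: "cmat set \<Rightarrow> cmat \<Rightarrow> cmat" where
  "im0 g0 Y = (SOME B. B \<in> g0 \<and> (\<exists>A\<in>g0. Y = A + cscale \<i> B))"

definition Rreal :: "cmat \<Rightarrow> (cmat \<Rightarrow> complex) \<Rightarrow> cmat \<Rightarrow> complex" where
  "Rreal X f n = vector_derivative (\<lambda>t::real. f (n ** mexp (t *\<^sub>R X))) (at 0)"

definition Rop :: "cmat set \<Rightarrow> cmat \<Rightarrow> (cmat \<Rightarrow> complex) \<Rightarrow> cmat \<Rightarrow> complex" where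
  "Rop g0 Y f n = Rreal (re0 g0 Y) f n + \<i> * Rreal (im0 g0 Y) f n"

definition Adinv :: "cmat \<Rightarrow> cmat \<Rightarrow> cmat" where
  "Adinv n Y = matrix_inv n ** Y ** n"

definition PiOp :: "cmat set \<Rightarrow> complex \<Rightarrow> cmat \<Rightarrow> (cmat \<Rightarrow> complex) \<Rightarrow> cmat \<Rightarrow> complex" where
  "PiOp g0 s Y f n = - s * dchi (q_part (Adinv n Y)) * f n - Rop g0 (nbar_part (Adinv n Y)) f n"

text \<open>Smoothness: iterated directional derivatives within a real subspace S,
  each Frechet differentiable within S (i.e. C^infinity on S).\<close>
fun dd :: "cmat list \<Rightarrow> (cmat \<Rightarrow> complex) \<Rightarrow> cmat \<Rightarrow> complex" where
  "dd [] F = F"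
| "dd (v # vs) F = (\<lambda>x. vector_derivative (\<lambda>t::real. dd vs F (x + t *\<^sub>R v)) (at 0))"

definition smooth_on_sub :: "cmat set \<Rightarrow> (cmat \<Rightarrow> complex) \<Rightarrow> bool" where
  "smooth_on_sub S F \<longleftrightarrow> (\<forall>vs. set vs \<subseteq> S \<longrightarrow> (\<forall>x\<in>S. dd vs F differentiable (at x within S)))"

definition smooth_Nbar0 :: "cmat set \<Rightarrow> (cmat \<Rightarrow> complex) \<Rightarrow> bool" where
  "smooth_Nbar0 g0 f \<longleftrightarrow> smooth_on_sub (nbar \<inter> g0) (f \<circ> mexp)"

end

theory Submission
  imports Defs
begin

text \<open>
  In exponential coordinates the two-step nilpotent group Nbar_0 multiplies as
  exp M * exp (t V) = exp (M + t (V + [M, V]/2)). Hence R(V) acts on f as the directional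
  derivative of F = f o exp at M in the direction V + [M, V]/2, and this persists for complex V
  once directional derivatives are extended complex-linearly. With A = Ad(exp(-M)) X and
  Z = A_nbar, both Pi(X) R(Y) f and R(Y) Pi(X) f at exp M become explicit combinations of first
  and second chart derivatives of F; differentiating Ad(exp(-t Y)) A produces the bracket [A, Y].
  The second-order terms cancel by the symmetry of second derivatives (proved from the mean value
  theorem). Since brackets of three elements of nbar vanish, the first-order terms collapse to
  R([A, Y]_nbar - [Z, Y]) f, which is R([A, Y]_{V-}) f when Y lies in V-, and the zeroth-order
  terms leave s dchi([A, Y]_l) f.
\<close>

lemma matrix_add_rdistrib: "(A + B) ** C = A ** C + B ** (C :: 'a::semiring_1^'n^'m)"
  by (simp add: matrix_matrix_mult_def vec_eq_iff sum.distrib distrib_right)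

lemma matrix_diff_ldistrib: "C ** (A - B) = C ** A - C ** (B :: 'a::ring_1^'n^'m)"
  by (simp add: matrix_matrix_mult_def vec_eq_iff sum_subtractf right_diff_distrib)

lemma matrix_diff_rdistrib: "(A - B) ** C = A ** C - B ** (C :: 'a::ring_1^'n^'m)"
  by (simp add: matrix_matrix_mult_def vec_eq_iff sum_subtractf left_diff_distrib)

lemma matrix_neg_left: "(- A) ** C = - (A ** (C :: 'a::ring_1^'n^'m))"
  by (simp add: matrix_matrix_mult_def vec_eq_iff sum_negf)

lemma matrix_neg_right: "C ** (- A) = - (C ** (A :: 'a::ring_1^'n^'m))"
  by (simp add: matrix_matrix_mult_def vec_eq_iff sum_negf)

lemma matrix_scaleR_left: "(r *\<^sub>R A) ** C = r *\<^sub>R (A ** (C :: 'a::real_algebra_1^'n^'m))"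
  by (simp add: scalar_matrix_assoc)

lemma matrix_scaleR_right: "C ** (r *\<^sub>R A) = r *\<^sub>R (C ** (A :: 'a::real_algebra_1^'n^'m))"
  by (simp add: matrix_scalar_ac scalar_matrix_assoc)

lemma matrix_cscale_left: "cscale c A ** C = cscale c (A ** C)"
  by (simp add: matrix_matrix_mult_def vec_eq_iff cscale_def sum_distrib_left mult.assoc)

lemma matrix_cscale_right: "C ** cscale c A = cscale c (C ** A)"
  by (simp add: matrix_matrix_mult_def vec_eq_iff cscale_def sum_distrib_left mult.left_commute)

lemmas matrix_mult_simps = matrix_add_ldistrib matrix_add_rdistrib matrix_diff_ldistrib
  matrix_diff_rdistrib matrix_neg_left matrix_neg_right matrix_scaleR_left matrix_scaleR_right
  matrix_cscale_left matrix_cscale_right matrix_mul_assoc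

lemma matrix_inv_unique:
  fixes A B :: "'a::semiring_1^'n^'n"
  assumes "A ** B = mat 1" "B ** A = mat 1"
  shows "matrix_inv A = B"
proof -
  have "A ** matrix_inv A = mat 1 \<and> matrix_inv A ** A = mat 1"
    unfolding matrix_inv_def by (rule someI[of _ B]) (use assms in blast)
  then have "matrix_inv A = matrix_inv A ** (A ** B)"
    using assms by simp
  also have "\<dots> = B"
    using \<open>A ** matrix_inv A = mat 1 \<and> _\<close> by (simp add: matrix_mul_assoc)
  finally show ?thesis .
qed

lemma cscale_nth [simp]: "cscale c A $ i $ j = c * A $ i $ j"
  by (simp add: cscale_def)

lemma cscale_zero [simp]: "cscale c 0 = 0"
  by (simp add: vec_eq_iff)

lemma cscale_add: "cscale c (A + B) = cscale c A + cscale c B"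
  by (simp add: vec_eq_iff distrib_left)

lemma cscale_diff: "cscale c (A - B) = cscale c A - cscale c B"
  by (simp add: vec_eq_iff right_diff_distrib)

lemma scaleR_cmat_nth: "(r *\<^sub>R (A :: cmat)) $ i $ j = of_real r * A $ i $ j"
  using scaleR_conv_of_real[of r "A $ i $ j"] by simp

lemma cscale_scaleR: "cscale c (r *\<^sub>R A) = r *\<^sub>R cscale c A"
  by (simp add: vec_eq_iff scaleR_cmat_nth mult.left_commute)

lemma bracket_antisym: "bracket A B = - bracket B A"
  by (simp add: bracket_def)

lemma bracket_add_left: "bracket (A + B) C = bracket A C + bracket B C"
  by (simp add: bracket_def matrix_mult_simps)

lemma bracket_add_right: "bracket C (A + B) = bracket C A + bracket C B"
  by (simp add: bracket_def matrix_mult_simps)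

lemma bracket_diff_left: "bracket (A - B) C = bracket A C - bracket B C"
  by (simp add: bracket_def matrix_mult_simps)

lemma bracket_diff_right: "bracket C (A - B) = bracket C A - bracket C B"
  by (simp add: bracket_def matrix_mult_simps)

lemma bracket_neg_left: "bracket (- A) C = - bracket A C"
  by (simp add: bracket_def matrix_mult_simps)

lemma bracket_neg_right: "bracket C (- A) = - bracket C A"
  by (simp add: bracket_def matrix_mult_simps)

lemma bracket_scaleR_left: "bracket (r *\<^sub>R A) C = r *\<^sub>R bracket A C"
  by (simp add: bracket_def matrix_mult_simps scaleR_diff_right)

lemma bracket_scaleR_right: "bracket C (r *\<^sub>R A) = r *\<^sub>R bracket C A"
  by (simp add: bracket_def matrix_mult_simps scaleR_diff_right)

lemma bracket_cscale_left: "bracket (cscale c A) B = cscale c (bracket A B)"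
  by (simp add: bracket_def matrix_mult_simps cscale_diff)

lemma bracket_cscale_right: "bracket A (cscale c B) = cscale c (bracket A B)"
  by (simp add: bracket_def matrix_mult_simps cscale_diff)

lemmas bracket_linear_simps = bracket_add_left bracket_add_right bracket_diff_left
  bracket_diff_right bracket_neg_left bracket_neg_right bracket_scaleR_left bracket_scaleR_right
  bracket_cscale_left bracket_cscale_right

lemma bounded_bilinear_matrix_mult: "bounded_bilinear (\<lambda>A B :: cmat. A ** B)"
  unfolding bilinear_conv_bounded_bilinear[symmetric] bilinear_def
  by (auto intro!: linearI simp: matrix_mult_simps)

lemma bounded_bilinear_bracket: "bounded_bilinear bracket"
  unfolding bilinear_conv_bounded_bilinear[symmetric] bilinear_def
  by (auto intro!: linearI simp: bracket_linear_simps)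

section \<open>The grading of so(8) by ad(H_gamma)\<close>

lemma exhaust_8:
  fixes x :: 8
  shows "x = 0 \<or> x = 1 \<or> x = 2 \<or> x = 3 \<or> x = 4 \<or> x = 5 \<or> x = 6 \<or> x = 7"
proof (induct x)
  case (of_int z)
  then have "z = 0 \<or> z = 1 \<or> z = 2 \<or> z = 3 \<or> z = 4 \<or> z = 5 \<or> z = 6 \<or> z = 7" by fastforce
  then show ?case by auto
qed

definition grade :: "8 \<Rightarrow> int" where
  "grade i = (if i = 0 \<or> i = 1 then 1 else if i = 6 \<or> i = 7 then -1 else 0)"

lemma grade_cases: "grade i = -1 \<or> grade i = 0 \<or> grade i = 1"
  by (simp add: grade_def)

lemma grade_diff_cases: "grade i - grade j \<in> {-2, -1, 0, 1, 2}"
  using grade_cases[of i] grade_cases[of j] by auto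

lemma grade_antidiagonal: "grade (7 - i) = - grade i"
  using exhaust_8[of i] by (auto simp: grade_def)

lemma comp_nth: "comp k W $ i $ j = (if of_int (grade i - grade j) = k then W $ i $ j else 0)"
  by (simp add: comp_def Hg_def grade_def)

lemma comp_of_int_nth: "comp (of_int k) W $ i $ j = (if grade i - grade j = k then W $ i $ j else 0)"
  unfolding comp_nth of_int_eq_iff ..

lemmas comp_nths =
  comp_of_int_nth[of "-2", simplified] comp_of_int_nth[of "-1", simplified]
  comp_of_int_nth[of 0, simplified] comp_of_int_nth[of 1, simplified]
  comp_of_int_nth[of 2, simplified]

lemma comp_add: "comp k (A + B) = comp k A + comp k B"
  by (simp add: vec_eq_iff comp_nth)

lemma comp_diff: "comp k (A - B) = comp k A - comp k B"
  by (simp add: vec_eq_iff comp_nth)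

lemma comp_neg: "comp k (- A) = - comp k A"
  by (simp add: vec_eq_iff comp_nth)

lemma comp_cscale: "comp k (cscale c A) = cscale c (comp k A)"
  by (simp add: vec_eq_iff comp_nth)

lemma comp_scaleR: "comp k (r *\<^sub>R A) = r *\<^sub>R comp k A"
  by (simp add: vec_eq_iff comp_nth)

lemma comp_comp_0: "comp 0 (comp 0 W) = comp 0 W"
  by (simp add: vec_eq_iff comp_nths)

lemma comp_0_q_part: "comp 0 (q_part W) = comp 0 W"
  by (simp add: vec_eq_iff q_part_def comp_nths)

lemma nbar_part_plus_q_part: "nbar_part W + q_part W = W"
  using grade_diff_cases by (auto simp: vec_eq_iff nbar_part_def q_part_def comp_nths)

lemma nbar_part_add: "nbar_part (A + B) = nbar_part A + nbar_part B"
  by (simp add: nbar_part_def comp_add)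

lemma nbar_part_cscale: "nbar_part (cscale c A) = cscale c (nbar_part A)"
  by (simp add: nbar_part_def comp_cscale cscale_add)

lemma bounded_linear_nbar_part: "bounded_linear nbar_part"
  unfolding linear_conv_bounded_linear[symmetric]
  by (auto intro!: linearI simp: nbar_part_add nbar_part_def comp_add comp_scaleR scaleR_add_right)

lemma so8_iff: "W \<in> so8 \<longleftrightarrow> (\<forall>i j. W $ (7 - j) $ i + W $ (7 - i) $ j = 0)"
proof -
  have right: "(\<Sum>l\<in>UNIV. W $ l $ i * (if j = 7 - l then 1 else 0)) = W $ (7 - j) $ i" for i j
  proof -
    have "\<And>l::8. (j = 7 - l) = (l = 7 - j)"
      by (auto simp: algebra_simps)
    then show ?thesis
      by (simp add: if_distrib cong: if_cong)
  qed
  have left: "(\<Sum>l\<in>UNIV. (if l = 7 - i then 1 else 0) * W $ l $ j) = W $ (7 - i) $ j" for i j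
  proof -
    have "\<And>l. (if l = 7 - i then 1 else 0) * W $ l $ j = (if l = 7 - i then W $ l $ j else 0)"
      by simp
    then show ?thesis
      by (simp only:) simp
  qed
  show ?thesis
    by (simp add: so8_def vec_eq_iff transpose_def matrix_matrix_mult_def Jform_def right left)
qed

lemma subspace_so8: "subspace so8"
proof (unfold subspace_def, intro conjI ballI allI)
  show "0 \<in> so8"
    by (simp add: so8_iff)
next
  fix A B assume "A \<in> so8" "B \<in> so8"
  moreover have "(A + B) $ (7 - j) $ i + (A + B) $ (7 - i) $ j
      = (A $ (7 - j) $ i + A $ (7 - i) $ j) + (B $ (7 - j) $ i + B $ (7 - i) $ j)" for i j
    by (simp add: algebra_simps)
  ultimately show "A + B \<in> so8"
    unfolding so8_iff by simp
next
  fix r and A :: cmat assume "A \<in> so8"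
  moreover have "(r *\<^sub>R A) $ (7 - j) $ i + (r *\<^sub>R A) $ (7 - i) $ j
      = of_real r * (A $ (7 - j) $ i + A $ (7 - i) $ j)" for i j
    by (simp only: scaleR_cmat_nth distrib_left)
  ultimately show "r *\<^sub>R A \<in> so8"
    unfolding so8_iff by simp
qed

lemma so8_cscale: "A \<in> so8 \<Longrightarrow> cscale c A \<in> so8"
  by (simp add: so8_iff flip: distrib_left)

lemma so8_bracket:
  assumes "A \<in> so8" "B \<in> so8"
  shows "bracket A B \<in> so8"
proof -
  have A: "transpose A ** Jform = - (Jform ** A)" and B: "transpose B ** Jform = - (Jform ** B)"
    using assms by (simp_all add: so8_def eq_neg_iff_add_eq_0)
  have "transpose (bracket A B) = transpose B ** transpose A - transpose A ** transpose B"
    by (simp add: bracket_def transpose_def matrix_matrix_mult_def vec_eq_iff mult.commute)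
  then have "transpose (bracket A B) ** Jform
      = transpose B ** (transpose A ** Jform) - transpose A ** (transpose B ** Jform)"
    by (simp add: matrix_mult_simps)
  also have "\<dots> = - ((transpose B ** Jform) ** A) + ((transpose A ** Jform) ** B)"
    by (simp add: A B matrix_neg_right matrix_mul_assoc)
  also have "\<dots> = - (Jform ** bracket A B)"
    by (simp add: A B matrix_mult_simps bracket_def)
  finally show ?thesis
    by (simp add: so8_def)
qed

lemma comp_so8:
  assumes "W \<in> so8"
  shows "comp k W \<in> so8"
proof -
  have "grade (7 - j) - grade i = grade (7 - i) - grade j" for i j
    by (simp add: grade_antidiagonal)
  then show ?thesis
    using assms by (auto simp: so8_iff comp_nth add.commute)
qed

lemma nbar_part_so8: "W \<in> so8 \<Longrightarrow> nbar_part W \<in> so8"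
  by (simp add: nbar_part_def subspace_add[OF subspace_so8] comp_so8)

lemma q_part_so8: "W \<in> so8 \<Longrightarrow> q_part W \<in> so8"
  by (simp add: q_part_def subspace_add[OF subspace_so8] comp_so8)

definition lowering :: "cmat \<Rightarrow> bool" where
  "lowering A \<longleftrightarrow> (\<forall>i j. grade j \<le> grade i \<longrightarrow> A $ i $ j = 0)"

definition lowering2 :: "cmat \<Rightarrow> bool" where
  "lowering2 A \<longleftrightarrow> (\<forall>i j. grade j < grade i + 2 \<longrightarrow> A $ i $ j = 0)"

lemma lowering_mult:
  assumes "lowering A" "lowering B"
  shows "lowering2 (A ** B)"
  unfolding lowering2_def
proof (intro allI impI)
  fix i j assume ij: "grade j < grade i + 2"
  have zero: "A $ i $ l * B $ l $ j = 0" for l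
  proof -
    have "grade l \<le> grade i \<or> grade j \<le> grade l"
      using ij grade_cases[of i] grade_cases[of j] grade_cases[of l] by auto
    then show ?thesis
      using assms by (auto simp: lowering_def)
  qed
  show "(A ** B) $ i $ j = 0"
    by (simp add: matrix_matrix_mult_def zero del: mult_eq_0_iff)
qed

lemma lowering2_mult_left:
  assumes "lowering2 A" "lowering B"
  shows "A ** B = 0"
proof -
  have zero: "A $ i $ l * B $ l $ j = 0" for i j l
  proof -
    have "grade l < grade i + 2 \<or> grade j \<le> grade l"
      using grade_cases[of i] grade_cases[of j] grade_cases[of l] by auto
    then show ?thesis
      using assms by (auto simp: lowering_def lowering2_def)
  qed
  show ?thesis
    by (simp add: matrix_matrix_mult_def vec_eq_iff zero del: mult_eq_0_iff)
qed

lemma lowering2_mult_right: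
  assumes "lowering A" "lowering2 B"
  shows "A ** B = 0"
proof -
  have zero: "A $ i $ l * B $ l $ j = 0" for i j l
  proof -
    have "grade l \<le> grade i \<or> grade j < grade l + 2"
      using grade_cases[of i] grade_cases[of j] grade_cases[of l] by auto
    then show ?thesis
      using assms by (auto simp: lowering_def lowering2_def)
  qed
  show ?thesis
    by (simp add: matrix_matrix_mult_def vec_eq_iff zero del: mult_eq_0_iff)
qed

lemma lowering_mult3: "lowering A \<Longrightarrow> lowering B \<Longrightarrow> lowering C \<Longrightarrow> A ** B ** C = 0"
  by (simp add: lowering2_mult_left lowering_mult)

lemma lowering_neg: "lowering A \<Longrightarrow> lowering (- A)"
  by (simp add: lowering_def)

lemma lowering_scaleR: "lowering A \<Longrightarrow> lowering (r *\<^sub>R A)"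
  by (simp add: lowering_def)

lemma lowering_cscale: "lowering A \<Longrightarrow> lowering (cscale c A)"
  by (simp add: lowering_def)

lemma lowering2_bracket: "lowering A \<Longrightarrow> lowering B \<Longrightarrow> lowering2 (bracket A B)"
  using lowering_mult by (auto simp: bracket_def lowering2_def)

lemma lowering_bracket: "lowering A \<Longrightarrow> lowering B \<Longrightarrow> lowering (bracket A B)"
  using lowering2_bracket by (auto simp: lowering_def lowering2_def)

lemma lowering_bracket_bracket:
  "lowering A \<Longrightarrow> lowering B \<Longrightarrow> lowering C \<Longrightarrow> bracket (bracket A B) C = 0"
  using lowering2_mult_left[OF lowering2_bracket] lowering2_mult_right[OF _ lowering2_bracket]
  by (simp add: bracket_def[of "bracket A B"])

lemma nbar_iff: "W \<in> nbar \<longleftrightarrow> W \<in> so8 \<and> lowering W"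
proof -
  have "comp (-2) W + comp (-1) W = W \<longleftrightarrow> lowering W"
  proof
    assume W: "comp (-2) W + comp (-1) W = W"
    show "lowering W"
      unfolding lowering_def
    proof (intro allI impI)
      fix i j assume "grade j \<le> grade i"
      then have "grade i - grade j \<noteq> -2" "grade i - grade j \<noteq> -1"
        by auto
      moreover have "(comp (-2) W + comp (-1) W) $ i $ j = W $ i $ j"
        using W by simp
      ultimately show "W $ i $ j = 0"
        by (simp add: comp_nths)
    qed
  next
    assume "lowering W"
    then have "(comp (-2) W + comp (-1) W) $ i $ j = W $ i $ j" for i j
      using grade_cases[of i] grade_cases[of j] by (auto simp: lowering_def comp_nths)
    then show "comp (-2) W + comp (-1) W = W"
      by (simp add: vec_eq_iff)
  qed
  then show ?thesis
    by (auto simp: nbar_def)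
qed

lemma subspace_nbar: "subspace nbar"
  using subspace_so8 by (auto simp: subspace_def nbar_iff lowering_def)

lemma nbar_cscale: "A \<in> nbar \<Longrightarrow> cscale c A \<in> nbar"
  by (simp add: nbar_iff so8_cscale lowering_cscale)

lemma nbar_bracket: "A \<in> nbar \<Longrightarrow> B \<in> nbar \<Longrightarrow> bracket A B \<in> nbar"
  by (simp add: nbar_iff so8_bracket lowering_bracket)

lemma nbar_part_nbar: "W \<in> so8 \<Longrightarrow> nbar_part W \<in> nbar"
  by (simp add: nbar_iff nbar_part_so8) (simp add: lowering_def nbar_part_def comp_nths)

lemma q_part_qalg: "W \<in> so8 \<Longrightarrow> q_part W \<in> qalg"
  by (simp add: qalg_def q_part_so8) (simp add: vec_eq_iff q_part_def comp_nths)

lemma qalg_neg: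
  assumes "W \<in> qalg"
  shows "- W \<in> qalg"
proof -
  have "comp 0 (- W) + comp 1 (- W) + comp 2 (- W) = - (comp 0 W + comp 1 W + comp 2 W)"
    by (simp add: comp_neg)
  also have "\<dots> = - W"
    using assms by (simp add: qalg_def)
  finally show ?thesis
    using assms by (simp add: qalg_def subspace_neg[OF subspace_so8])
qed

lemma nbar_inter_qalg:
  assumes "W \<in> nbar" "W \<in> qalg"
  shows "W = 0"
proof -
  have n: "comp (-2) W + comp (-1) W = W" and q: "comp 0 W + comp 1 W + comp 2 W = W"
    using assms by (auto simp: nbar_def qalg_def)
  have "W $ i $ j = 0" for i j
  proof -
    have "W $ i $ j = (comp (-2) W + comp (-1) W) $ i $ j"
      using n by simp
    moreover have "W $ i $ j = (comp 0 W + comp 1 W + comp 2 W) $ i $ j"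
      using q by simp
    ultimately show ?thesis
      by (auto simp: comp_nths split: if_splits)
  qed
  then show ?thesis
    by (simp add: vec_eq_iff)
qed

lemma Vminus_entry:
  assumes "Y \<in> Vminus" "Y $ l $ j \<noteq> 0"
  shows "grade l - grade j = -1"
proof -
  have "comp (-1) Y $ l $ j \<noteq> 0"
    using assms by (simp add: Vminus_def)
  then show ?thesis
    by (simp add: comp_nths split: if_splits)
qed

lemma Vminus_nbar: "Y \<in> Vminus \<Longrightarrow> Y \<in> nbar"
  using Vminus_entry by (fastforce simp: nbar_iff Vminus_def lowering_def)

lemma comp_minus2_mult_Vminus:
  assumes Y: "Y \<in> Vminus"
  shows "comp (-2) (K ** Y) = nbar_part K ** Y"
    and "comp (-2) (Y ** K) = Y ** nbar_part K"
proof -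
  have right: "nbar_part K $ i $ l * Y $ l $ j
      = (if grade i - grade j = -2 then K $ i $ l * Y $ l $ j else 0)" for i j l
  proof (cases "Y $ l $ j = 0")
    case False
    then have "grade l - grade j = -1"
      by (rule Vminus_entry[OF Y])
    then show ?thesis
      using grade_cases[of i] grade_cases[of j] by (auto simp: nbar_part_def comp_nths)
  qed simp
  have left: "Y $ i $ l * nbar_part K $ l $ j
      = (if grade i - grade j = -2 then Y $ i $ l * K $ l $ j else 0)" for i j l
  proof (cases "Y $ i $ l = 0")
    case False
    then have "grade i - grade l = -1"
      by (rule Vminus_entry[OF Y])
    then show ?thesis
      using grade_cases[of i] grade_cases[of j] by (auto simp: nbar_part_def comp_nths)
  qed simp
  show "comp (-2) (K ** Y) = nbar_part K ** Y" "comp (-2) (Y ** K) = Y ** nbar_part K"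
    by (simp_all add: vec_eq_iff matrix_matrix_mult_def comp_nths right left)
qed

lemma comp_minus1_bracket_Vminus:
  assumes "Y \<in> Vminus"
  shows "comp (-1) (bracket K Y) = nbar_part (bracket K Y) - bracket (nbar_part K) Y"
proof -
  have "comp (-2) (bracket K Y) = bracket (nbar_part K) Y"
    using comp_minus2_mult_Vminus[OF assms] by (simp add: bracket_def comp_diff)
  then show ?thesis
    by (simp add: nbar_part_def)
qed

text \<open>On the Cartan subalgebra the highest root is gamma = e1 + e2; dchi_lin extends it
  linearly to all matrices.\<close>

definition dchi_lin :: "cmat \<Rightarrow> complex" where
  "dchi_lin W = W $ 0 $ 0 + W $ 1 $ 1"

lemma bounded_linear_dchi_lin: "bounded_linear dchi_lin"
  unfolding linear_conv_bounded_linear[symmetric] dchi_lin_def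
  by (auto intro!: linearI simp: scaleR_add_right)

lemma dchi_lin_add: "dchi_lin (A + B) = dchi_lin A + dchi_lin B"
  by (simp add: dchi_lin_def)

lemma dchi_lin_cscale: "dchi_lin (cscale c A) = c * dchi_lin A"
  by (simp add: dchi_lin_def distrib_left)

lemma bracket_comp_0_Xg:
  assumes "W \<in> so8"
  shows "bracket (comp 0 W) Xg = cscale (dchi_lin W) Xg"
proof -
  have W: "W $ (7 - j) $ i + W $ (7 - i) $ j = 0" for i j
    using assms by (simp add: so8_iff)
  have r1: "W $ 6 $ 6 = - W $ 1 $ 1" and r2: "W $ 7 $ 7 = - W $ 0 $ 0"
    and r3: "W $ 6 $ 7 = - W $ 0 $ 1" and r4: "W $ 7 $ 6 = - W $ 1 $ 0"
    using W[of 6 1] W[of 7 0] W[of 7 1] W[of 6 0] by (simp_all add: eq_neg_iff_add_eq_0 add.commute)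
  have right: "(A ** Xg) $ i $ j = (if j = 6 then A $ i $ 0 else if j = 7 then - A $ i $ 1 else 0)"
    for A :: cmat and i j
  proof -
    have "A $ i $ l * Xg $ l $ j
        = (if l = 0 \<and> j = 6 then A $ i $ 0 else if l = 1 \<and> j = 7 then - A $ i $ 1 else 0)" for l
      by (auto simp: Xg_def)
    then show ?thesis
      by (simp add: matrix_matrix_mult_def sum.If_cases)
  qed
  have left: "(Xg ** A) $ i $ j = (if i = 0 then A $ 6 $ j else if i = 1 then - A $ 7 $ j else 0)"
    for A :: cmat and i j
  proof -
    have "Xg $ i $ l * A $ l $ j
        = (if i = 0 \<and> l = 6 then A $ 6 $ j else if i = 1 \<and> l = 7 then - A $ 7 $ j else 0)" for l
      by (auto simp: Xg_def)
    then show ?thesis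
      by (simp add: matrix_matrix_mult_def sum.If_cases)
  qed
  have "bracket (comp 0 W) Xg $ i $ j = cscale (dchi_lin W) Xg $ i $ j" for i j
    unfolding bracket_def vector_minus_component left right cscale_nth
    using exhaust_8[of i] exhaust_8[of j]
    by (elim disjE; simp only: comp_nths grade_def Xg_def dchi_lin_def r1 r2 r3 r4; simp)
  then show ?thesis
    by (simp add: vec_eq_iff)
qed

lemma dchi_so8: "W \<in> so8 \<Longrightarrow> dchi W = dchi_lin W"
  unfolding dchi_def
proof (subst bracket_comp_0_Xg, assumption, rule the_equality)
  fix c assume "cscale (dchi_lin W) Xg = cscale c Xg"
  then have "cscale (dchi_lin W) Xg $ 0 $ 6 = cscale c Xg $ 0 $ 6"
    by simp
  then show "c = dchi_lin W"
    by (simp add: Xg_def)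
qed simp

lemma dchi_comp_0: "dchi (comp 0 W) = dchi W"
  by (simp add: dchi_def comp_comp_0)

lemma dchi_q_part: "dchi (q_part W) = dchi W"
  by (simp add: dchi_def comp_0_q_part)

section \<open>The exponential map on nbar\<close>

definition exp_trunc :: "cmat \<Rightarrow> cmat" where
  "exp_trunc N = mat 1 + N + (1/2) *\<^sub>R (N ** N)"

lemma exp_trunc_0: "exp_trunc 0 = mat 1"
  by (simp add: exp_trunc_def)

lemma mexp_lowering:
  assumes "lowering N"
  shows "mexp N = exp_trunc N"
proof -
  have "matpow N k = 0" if "k \<notin> {0, 1, 2}" for k
  proof -
    obtain m where "k = Suc (Suc (Suc m))"
      using \<open>k \<notin> {0, 1, 2}\<close> by (metis insertCI nat.exhaust numeral_2_eq_2 One_nat_def)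
    then show ?thesis
      using lowering_mult3[OF assms assms assms] by (simp add: matrix_mul_assoc)
  qed
  then have "mexp N = (\<Sum>k\<in>{0, 1, 2}. inverse (fact k) *\<^sub>R matpow N k)"
    unfolding mexp_def by (intro suminf_finite) auto
  also have "\<dots> = exp_trunc N"
    by (simp add: exp_trunc_def numeral_2_eq_2 fact_numeral)
  finally show ?thesis .
qed

text \<open>Baker--Campbell--Hausdorff formula, which terminates since nbar is two-step nilpotent.\<close>

lemma exp_trunc_mult:
  assumes "lowering A" "lowering B"
  shows "exp_trunc A ** exp_trunc B = exp_trunc (A + B + (1/2) *\<^sub>R bracket A B)"
proof -
  have z: "X ** Y ** Z = 0" if "X \<in> {A, B}" "Y \<in> {A, B}" "Z \<in> {A, B}" for X Y Z
    using that assms lowering_mult3 by auto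
  have z': "W ** X ** Y ** Z = 0" if "X \<in> {A, B}" "Y \<in> {A, B}" "Z \<in> {A, B}" for W X Y Z
    using z[OF that] by (simp flip: matrix_mul_assoc)
  show ?thesis
    unfolding exp_trunc_def bracket_def
    by (simp add: matrix_mult_simps z z' scaleR_add_right scaleR_diff_right)
qed

lemma matrix_inv_exp_trunc:
  assumes "lowering N"
  shows "matrix_inv (exp_trunc N) = exp_trunc (- N)"
proof (rule matrix_inv_unique)
  show "exp_trunc N ** exp_trunc (- N) = mat 1" "exp_trunc (- N) ** exp_trunc N = mat 1"
    using exp_trunc_mult[of N "- N"] exp_trunc_mult[of "- N" N] assms
    by (simp_all add: lowering_neg bracket_def matrix_mult_simps exp_trunc_0)
qed

definition Adinv_exp :: "cmat \<Rightarrow> cmat \<Rightarrow> cmat" where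
  "Adinv_exp N X = exp_trunc (- N) ** X ** exp_trunc N"

lemma Adinv_exp_trunc: "lowering N \<Longrightarrow> Adinv (exp_trunc N) X = Adinv_exp N X"
  by (simp add: Adinv_def Adinv_exp_def matrix_inv_exp_trunc)

lemma Adinv_exp_add: "Adinv_exp N (A + B) = Adinv_exp N A + Adinv_exp N B"
  by (simp add: Adinv_exp_def matrix_mult_simps)

lemma Adinv_exp_cscale: "Adinv_exp N (cscale c A) = cscale c (Adinv_exp N A)"
  by (simp add: Adinv_exp_def matrix_mult_simps)

lemma Adinv_exp_expansion:
  assumes "lowering N"
  shows "Adinv_exp N X = X + bracket X N + (1/2) *\<^sub>R bracket (bracket X N) N
     + (1/6) *\<^sub>R bracket (bracket (bracket X N) N) N
     + (1/24) *\<^sub>R bracket (bracket (bracket (bracket X N) N) N) N"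
proof -
  have z: "N ** N ** N = 0" "Y ** N ** N ** N = 0" for Y
    using lowering_mult3[OF assms assms assms] by (simp_all flip: matrix_mul_assoc)
  show ?thesis
    unfolding Adinv_exp_def exp_trunc_def bracket_def
    by (simp only: matrix_mult_simps z matrix_mul_lid matrix_mul_rid times0_left times0_right
        scaleR_add_right scaleR_diff_right scaleR_zero_right add_0_left add_0_right diff_zero
        diff_0 scaleR_minus_right minus_zero)
      (simp add: vec_eq_iff scaleR_cmat_nth, simp add: scaleR_conv_of_real field_simps)
qed

lemma Adinv_exp_so8:
  assumes "N \<in> nbar" "X \<in> so8"
  shows "Adinv_exp N X \<in> so8"
proof -
  have "lowering N"
    using assms(1) by (simp add: nbar_iff)
  with assms show ?thesis
    unfolding Adinv_exp_expansion[OF \<open>lowering N\<close>] nbar_iff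
    by (intro subspace_add[OF subspace_so8] subspace_scale[OF subspace_so8] so8_bracket) auto
qed

lemma Adinv_exp_mult:
  assumes "lowering A" "lowering B"
  shows "Adinv_exp (A + B + (1/2) *\<^sub>R bracket A B) X = exp_trunc (- B) ** Adinv_exp A X ** exp_trunc B"
proof -
  have "exp_trunc (- B) ** exp_trunc (- A) = exp_trunc (- (A + B + (1/2) *\<^sub>R bracket A B))"
    using exp_trunc_mult[of "- B" "- A"] assms
    by (simp add: lowering_neg bracket_linear_simps bracket_antisym[of B A] algebra_simps)
  then show ?thesis
    using assms by (simp add: Adinv_exp_def exp_trunc_mult matrix_mul_assoc flip: exp_trunc_mult)
qed

section \<open>Directional derivatives on a real subspace\<close>

lemma has_vector_derivative_line: "((\<lambda>t. x + t *\<^sub>R v) has_vector_derivative v) (at s)"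
  unfolding has_vector_derivative_def by (auto intro!: derivative_eq_intros)

lemma dd_single: "dd [v] G x = vector_derivative (\<lambda>t. G (x + t *\<^sub>R v)) (at 0)"
  by simp

lemma dd_Cons_eq: "dd (v # vs) G = dd [v] (dd vs G)"
  by (simp add: fun_eq_iff)

lemma dd_append: "dd vs (dd [v] G) = dd (vs @ [v]) G"
proof (induction vs)
  case (Cons w vs)
  then show ?case
    by (simp add: dd_Cons_eq[of w vs] dd_Cons_eq[of w "vs @ [v]"])
qed simp

declare dd.simps(2) [simp del]

lemma subspace_line: "subspace S \<Longrightarrow> x \<in> S \<Longrightarrow> v \<in> S \<Longrightarrow> x + t *\<^sub>R v \<in> S"
  by (simp add: subspace_add subspace_scale)

lemma linear_approx_diff_bound:
  fixes g :: "'a::real_normed_vector \<Rightarrow> 'b::real_normed_vector"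
  assumes "linear L"
    and near: "\<And>y. y \<in> S \<Longrightarrow> norm (y - x) < d \<Longrightarrow> norm (g y - g x - L (y - x)) \<le> e * norm (y - x)"
    and "y1 \<in> S" "y2 \<in> S" "norm (y1 - x) \<le> r" "norm (y2 - x) \<le> r" "r < d" "e \<ge> 0"
  shows "norm (g y1 - g y2 - L (y1 - y2)) \<le> 2 * e * r"
proof -
  have n: "norm (g y - g x - L (y - x)) \<le> e * r" if "y \<in> S" "norm (y - x) \<le> r" for y
  proof -
    have "norm (g y - g x - L (y - x)) \<le> e * norm (y - x)"
      using near that \<open>r < d\<close> by simp
    also have "\<dots> \<le> e * r"
      using that \<open>e \<ge> 0\<close> by (simp add: mult_left_mono)
    finally show ?thesis .
  qed
  have "g y1 - g y2 - L (y1 - y2) = (g y1 - g x - L (y1 - x)) - (g y2 - g x - L (y2 - x))"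
    by (simp add: linear_diff[OF \<open>linear L\<close>] algebra_simps)
  then have "norm (g y1 - g y2 - L (y1 - y2)) \<le> e * r + e * r"
    using norm_triangle_ineq4[of "g y1 - g x - L (y1 - x)" "g y2 - g x - L (y2 - x)"]
      n[OF assms(3,5)] n[OF assms(4,6)] by (simp only:)
  then show ?thesis
    by simp
qed

context
  fixes S :: "cmat set"
  assumes S: "subspace S"
begin

lemma smooth_on_sub_dd: "smooth_on_sub S G \<Longrightarrow> v \<in> S \<Longrightarrow> smooth_on_sub S (dd [v] G)"
  unfolding smooth_on_sub_def dd_append by simp

lemma smooth_on_sub_has_derivative:
  assumes "smooth_on_sub S G" "x \<in> S"
  obtains D where "(G has_derivative D) (at x within S)"
proof -
  have "dd [] G differentiable (at x within S)"
    using assms unfolding smooth_on_sub_def by (metis empty_subsetI list.set(1))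
  then show ?thesis
    using that by (auto simp: differentiable_def)
qed

lemma has_vector_derivative_comp_within_subspace:
  assumes "(G has_derivative D) (at x within S)" "\<And>t. p t \<in> S"
    and "(p has_vector_derivative p') (at s)" "p s = x"
  shows "((\<lambda>t. G (p t)) has_vector_derivative D p') (at s)"
proof -
  have "range p \<subseteq> S"
    using assms(2) by auto
  then have "(G has_derivative D) (at (p s) within range p)"
    using assms(1,4) has_derivative_subset by blast
  from vector_derivative_diff_chain_within[OF assms(3) this] show ?thesis
    by (simp add: o_def)
qed

lemma dd_eq_derivative:
  assumes "(G has_derivative D) (at x within S)" "x \<in> S" "v \<in> S"
  shows "dd [v] G x = D v"
proof -
  have "((\<lambda>t. G (x + t *\<^sub>R v)) has_vector_derivative D v) (at 0)"
    by (rule has_vector_derivative_comp_within_subspace[OF assms(1)])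
      (auto intro: subspace_line[OF S] assms has_vector_derivative_line)
  then show ?thesis
    by (simp add: dd_single vector_derivative_at)
qed

lemma has_vector_derivative_smooth_comp:
  assumes "smooth_on_sub S G" "\<And>t. p t \<in> S"
    and "(p has_vector_derivative p') (at s)" "p' \<in> S"
  shows "((\<lambda>t. G (p t)) has_vector_derivative dd [p'] G (p s)) (at s)"
proof -
  obtain D where D: "(G has_derivative D) (at (p s) within S)"
    using smooth_on_sub_has_derivative[OF assms(1,2)] .
  show ?thesis
    using has_vector_derivative_comp_within_subspace[OF D assms(2,3) refl]
      dd_eq_derivative[OF D assms(2,4)] by simp
qed

lemma has_vector_derivative_smooth_line:
  "smooth_on_sub S G \<Longrightarrow> x \<in> S \<Longrightarrow> v \<in> S \<Longrightarrow>
    ((\<lambda>t. G (x + t *\<^sub>R v)) has_vector_derivative dd [v] G (x + s *\<^sub>R v)) (at s)"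
  by (rule has_vector_derivative_smooth_comp) (auto intro: subspace_line[OF S] has_vector_derivative_line)

lemma dd_linear:
  assumes "smooth_on_sub S G" "x \<in> S"
  shows "\<exists>D. linear D \<and> (\<forall>v\<in>S. dd [v] G x = D v)"
proof -
  obtain D where D: "(G has_derivative D) (at x within S)"
    using smooth_on_sub_has_derivative[OF assms] .
  then show ?thesis
    using dd_eq_derivative[OF D assms(2)] has_derivative_linear by blast
qed

lemma dd_add:
  assumes "smooth_on_sub S G" "x \<in> S" "a \<in> S" "b \<in> S"
  shows "dd [a + b] G x = dd [a] G x + dd [b] G x"
proof -
  obtain D where "linear D" "\<forall>v\<in>S. dd [v] G x = D v"
    using dd_linear[OF assms(1,2)] by blast
  then show ?thesis
    using assms S by (simp add: subspace_add linear_add)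
qed

lemma dd_scaleR:
  assumes "smooth_on_sub S G" "x \<in> S" "a \<in> S"
  shows "dd [r *\<^sub>R a] G x = of_real r * dd [a] G x"
proof -
  obtain D where "linear D" "\<forall>v\<in>S. dd [v] G x = D v"
    using dd_linear[OF assms(1,2)] by blast
  then show ?thesis
    using assms S by (simp add: subspace_scale linear_scale flip: scaleR_conv_of_real)
qed

lemma dd_sum:
  assumes "smooth_on_sub S G" "x \<in> S" "finite B" "B \<subseteq> S"
  shows "dd [(\<Sum>b\<in>B. r b *\<^sub>R b)] G x = (\<Sum>b\<in>B. of_real (r b) * dd [b] G x)"
proof -
  obtain D where D: "linear D" "\<forall>v\<in>S. dd [v] G x = D v"
    using dd_linear[OF assms(1,2)] by blast
  have "(\<Sum>b\<in>B. r b *\<^sub>R b) \<in> S"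
    using assms(4) S by (intro subspace_sum subspace_scale) auto
  then have "dd [(\<Sum>b\<in>B. r b *\<^sub>R b)] G x = (\<Sum>b\<in>B. r b *\<^sub>R D b)"
    by (simp add: D linear_sum[OF D(1)] linear_scale[OF D(1)])
  also have "\<dots> = (\<Sum>b\<in>B. of_real (r b) * dd [b] G x)"
    using D assms(4) by (intro sum.cong) (auto simp: scaleR_conv_of_real)
  finally show ?thesis .
qed

lemma dd_cong:
  assumes "\<And>y. y \<in> S \<Longrightarrow> G y = H y" "x \<in> S" "v \<in> S"
  shows "dd [v] G x = dd [v] H x"
proof -
  have "(\<lambda>t. G (x + t *\<^sub>R v)) = (\<lambda>t. H (x + t *\<^sub>R v))"
    using assms subspace_line[OF S] by auto
  then show ?thesis
    by (simp add: dd_single)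
qed

lemma dd_linear_combination:
  assumes "smooth_on_sub S G" "smooth_on_sub S H" "x \<in> S" "v \<in> S"
  shows "dd [v] (\<lambda>y. G y + c * H y) x = dd [v] G x + c * dd [v] H x"
proof -
  have "((\<lambda>t. G (x + t *\<^sub>R v) + c * H (x + t *\<^sub>R v)) has_vector_derivative
      dd [v] G (x + 0 *\<^sub>R v) + c * dd [v] H (x + 0 *\<^sub>R v)) (at 0)"
    using assms by (intro has_vector_derivative_add has_vector_derivative_mult_right
        has_vector_derivative_smooth_line)
  then show ?thesis
    by (simp add: dd_single vector_derivative_at)
qed

definition second_diff :: "(cmat \<Rightarrow> complex) \<Rightarrow> cmat \<Rightarrow> cmat \<Rightarrow> cmat \<Rightarrow> real \<Rightarrow> complex" where
  "second_diff G x a b t = G (x + t *\<^sub>R a + t *\<^sub>R b) - G (x + t *\<^sub>R a) - G (x + t *\<^sub>R b) + G x"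

lemma second_diff_commute: "second_diff G x a b t = second_diff G x b a t"
  by (simp add: second_diff_def algebra_simps)

lemma second_diff_mean_value:
  assumes sm: "smooth_on_sub S G" and x: "x \<in> S" and a: "a \<in> S" and b: "b \<in> S" and t: "t > 0"
    and bound: "\<And>s. 0 < s \<Longrightarrow> s < t \<Longrightarrow>
      norm (dd [a] G (x + s *\<^sub>R a + t *\<^sub>R b) - dd [a] G (x + s *\<^sub>R a) - of_real t * L) \<le> C"
  shows "norm (second_diff G x a b t - of_real (t\<^sup>2) * L) \<le> t * C"
proof -
  define g where "g s = dd [a] G ((x + t *\<^sub>R b) + s *\<^sub>R a) - dd [a] G (x + s *\<^sub>R a) - of_real t * L"
    for s
  define h where "h s = G ((x + t *\<^sub>R b) + s *\<^sub>R a) - G (x + s *\<^sub>R a) - of_real (s * t) * L" for s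
  have "((\<lambda>s. of_real (s * t) * L) has_vector_derivative of_real t * L) (at s)" for s
    by (auto intro!: derivative_eq_intros)
  then have h': "(h has_vector_derivative g s) (at s)" for s
    unfolding h_def g_def
    by (intro has_vector_derivative_diff has_vector_derivative_smooth_line[OF sm]
        subspace_line[OF S] x a b)
  then have "continuous_on {0..t} h"
    using has_vector_derivative_continuous continuous_at_imp_continuous_on by blast
  then obtain s where s: "0 < s" "s < t" and mvt: "norm (h t - h 0) \<le> norm ((t - 0) *\<^sub>R g s)"
    using mvt_general[OF t, of h "\<lambda>s u. u *\<^sub>R g s"] h' unfolding has_vector_derivative_def by auto
  have "h t - h 0 = second_diff G x a b t - of_real (t\<^sup>2) * L"
    by (simp add: h_def second_diff_def power2_eq_square algebra_simps)
  moreover have "norm (g s) \<le> C"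
    using bound[OF s] by (simp add: g_def ac_simps)
  then have "norm ((t - 0) *\<^sub>R g s) \<le> t * C"
    using t by (simp add: mult_left_mono)
  ultimately show ?thesis
    using mvt by simp
qed

lemma second_diff_bound:
  assumes sm: "smooth_on_sub S G" and x: "x \<in> S" and a: "a \<in> S" and b: "b \<in> S"
    and "linear La" and e: "e \<ge> 0"
    and near: "\<And>y. y \<in> S \<Longrightarrow> norm (y - x) < d \<Longrightarrow>
      norm (dd [a] G y - dd [a] G x - La (y - x)) \<le> e * norm (y - x)"
    and t: "0 < t" "t * (norm a + norm b + 1) < d"
  shows "norm (second_diff G x a b t - of_real (t\<^sup>2) * La b) \<le> 2 * e * (norm a + norm b + 1) * t\<^sup>2"
proof -
  define K where "K = norm a + norm b + 1"
  have "norm (second_diff G x a b t - of_real (t\<^sup>2) * La b) \<le> t * (2 * e * (t * K))"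
  proof (rule second_diff_mean_value[OF sm x a b \<open>0 < t\<close>])
    fix s assume s: "0 < s" "s < t"
    define y1 where "y1 = x + s *\<^sub>R a + t *\<^sub>R b"
    define y2 where "y2 = x + s *\<^sub>R a"
    have y: "y1 \<in> S" "y2 \<in> S"
      unfolding y1_def y2_def by (intro subspace_add[OF S] subspace_scale[OF S] x a b)+
    have "norm (y2 - x) \<le> t * norm a"
      using s by (simp add: y2_def mult_right_mono)
    also have "\<dots> \<le> t * K"
      using t by (simp add: K_def)
    finally have y2x: "norm (y2 - x) \<le> t * K" .
    have "norm (y1 - x) \<le> s * norm a + t * norm b"
      using s t norm_triangle_ineq[of "s *\<^sub>R a" "t *\<^sub>R b"] by (simp add: y1_def)
    also have "\<dots> \<le> t * K"
      using s t mult_right_mono[of s t "norm a"] by (simp add: K_def algebra_simps)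
    finally have y1x: "norm (y1 - x) \<le> t * K" .
    have "La (y1 - y2) = of_real t * La b"
      using linear_scale[OF \<open>linear La\<close>, of t b] by (simp add: y1_def y2_def scaleR_conv_of_real)
    then show "norm (dd [a] G (x + s *\<^sub>R a + t *\<^sub>R b) - dd [a] G (x + s *\<^sub>R a) - of_real t * La b)
        \<le> 2 * e * (t * K)"
      using linear_approx_diff_bound[OF \<open>linear La\<close> near y y1x y2x _ e] t
      by (simp add: y1_def y2_def K_def mult.commute)
  qed
  then show ?thesis
    by (simp add: K_def power2_eq_square mult_ac)
qed

lemma second_diff_tendsto:
  assumes sm: "smooth_on_sub S G" and x: "x \<in> S" and a: "a \<in> S" and b: "b \<in> S"
    and La: "(dd [a] G has_derivative La) (at x within S)"
  shows "((\<lambda>t. second_diff G x a b t / of_real (t\<^sup>2)) \<longlongrightarrow> La b) (at_right 0)"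
proof (rule tendstoI)
  fix \<epsilon> :: real assume "\<epsilon> > 0"
  define K where "K = norm a + norm b + 1"
  have K: "K > 0"
    unfolding K_def by (simp add: add_nonneg_pos)
  define e where "e = \<epsilon> / (4 * K)"
  have e: "e > 0"
    unfolding e_def using \<open>\<epsilon> > 0\<close> K by simp
  obtain d where d: "d > 0" and near: "\<And>y. y \<in> S \<Longrightarrow> norm (y - x) < d \<Longrightarrow>
      norm (dd [a] G y - dd [a] G x - La (y - x)) \<le> e * norm (y - x)"
    using La e unfolding has_derivative_within_alt by blast
  have "dist (second_diff G x a b t / of_real (t\<^sup>2)) (La b) < \<epsilon>" if t: "0 < t" "t < d / K" for t
  proof -
    have "t * K < d"
      using t K by (simp add: pos_less_divide_eq mult.commute)
    have "dist (second_diff G x a b t / of_real (t\<^sup>2)) (La b)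
      = norm (second_diff G x a b t - of_real (t\<^sup>2) * La b) / t\<^sup>2"
      using t by (simp add: dist_norm norm_divide field_simps norm_power)
    also have "\<dots> \<le> 2 * e * K * t\<^sup>2 / t\<^sup>2"
      using second_diff_bound[where d = d, OF sm x a b has_derivative_linear[OF La] less_imp_le[OF e]
          near t(1)] \<open>t * K < d\<close>
      by (intro divide_right_mono) (simp_all add: K_def)
    also have "\<dots> = \<epsilon> / 2"
      using t K by (simp add: e_def)
    finally show ?thesis
      using \<open>\<epsilon> > 0\<close> by simp
  qed
  then show "\<forall>\<^sub>F t in at_right 0. dist (second_diff G x a b t / of_real (t\<^sup>2)) (La b) < \<epsilon>"
    unfolding eventually_at_right_field using d K by (intro exI[of _ "d / K"]) auto
qed

lemma dd_commute:
  assumes sm: "smooth_on_sub S G" and x: "x \<in> S" and a: "a \<in> S" and b: "b \<in> S"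
  shows "dd [a] (dd [b] G) x = dd [b] (dd [a] G) x"
proof -
  obtain La where La: "(dd [a] G has_derivative La) (at x within S)"
    using smooth_on_sub_has_derivative[OF smooth_on_sub_dd[OF sm a] x] .
  obtain Lb where Lb: "(dd [b] G has_derivative Lb) (at x within S)"
    using smooth_on_sub_has_derivative[OF smooth_on_sub_dd[OF sm b] x] .
  have "La b = Lb a"
    using second_diff_tendsto[OF sm x a b La] second_diff_tendsto[OF sm x b a Lb]
    by (intro tendsto_unique[OF trivial_limit_at_right_real]) (simp_all add: second_diff_commute)
  then show ?thesis
    using dd_eq_derivative[OF La x b] dd_eq_derivative[OF Lb x a] by simp
qed

lemma dd_coordinates:
  assumes sm: "smooth_on_sub S G"
  shows "\<exists>B. finite B \<and> B \<subseteq> S \<and>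
    (\<forall>v\<in>S. \<forall>y\<in>S. dd [v] G y = (\<Sum>b\<in>B. of_real (v \<bullet> b) * dd [b] G y))"
proof -
  obtain B where B: "B \<subseteq> S" "pairwise orthogonal B" "\<And>b. b \<in> B \<Longrightarrow> norm b = 1"
    "independent B" "span B = S"
    using orthonormal_basis_subspace[OF S] by metis
  have "finite B"
    using B(4) by (rule independent_imp_finite)
  have "dd [v] G y = (\<Sum>b\<in>B. of_real (v \<bullet> b) * dd [b] G y)" if "v \<in> S" "y \<in> S" for v y
  proof -
    have "v = (\<Sum>b\<in>B. (v \<bullet> b) *\<^sub>R b)"
      using orthonormal_basis_expand[OF B(2,3)] B(5) \<open>finite B\<close> that(1) by simp
    then show ?thesis
      using dd_sum[OF sm that(2) \<open>finite B\<close> B(1), of "\<lambda>b. v \<bullet> b"] by simp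
  qed
  with \<open>finite B\<close> B(1) show ?thesis
    by blast
qed

lemma dd_sum_fun:
  assumes "finite B" "\<And>b. b \<in> B \<Longrightarrow> smooth_on_sub S (H b)" "x \<in> S" "v \<in> S"
  shows "dd [v] (\<lambda>y. \<Sum>b\<in>B. k b * H b y) x = (\<Sum>b\<in>B. k b * dd [v] (H b) x)"
proof -
  have "((\<lambda>t. \<Sum>b\<in>B. k b * H b (x + t *\<^sub>R v)) has_vector_derivative
      (\<Sum>b\<in>B. k b * dd [v] (H b) (x + 0 *\<^sub>R v))) (at 0)"
    using assms by (intro has_vector_derivative_sum has_vector_derivative_mult_right
        has_vector_derivative_smooth_line)
  then show ?thesis
    by (simp add: dd_single vector_derivative_at)
qed

lemma has_vector_derivative_dd_along_curve:
  assumes sm: "smooth_on_sub S G"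
    and p: "\<And>t. p t \<in> S" "(p has_vector_derivative p') (at 0)" "p' \<in> S"
    and w: "\<And>t. w t \<in> S" "(w has_vector_derivative w') (at 0)" "w' \<in> S"
  shows "((\<lambda>t. dd [w t] G (p t)) has_vector_derivative
      dd [p'] (dd [w 0] G) (p 0) + dd [w'] G (p 0)) (at 0)"
proof -
  obtain B where B: "finite B" "B \<subseteq> S"
    and expand: "\<forall>v\<in>S. \<forall>y\<in>S. dd [v] G y = (\<Sum>b\<in>B. of_real (v \<bullet> b) * dd [b] G y)"
    using dd_coordinates[OF sm] by blast
  have smooth_b: "smooth_on_sub S (dd [b] G)" if "b \<in> B" for b
    using smooth_on_sub_dd[OF sm] B(2) that by blast
  have coord: "((\<lambda>t. of_real (w t \<bullet> b) :: complex) has_vector_derivative of_real (w' \<bullet> b)) (at 0)"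
    for b
    using bounded_linear.has_vector_derivative[OF bounded_linear_inner_left w(2)]
    by (rule bounded_linear.has_vector_derivative[OF bounded_linear_of_real])
  have along_p: "((\<lambda>t. dd [b] G (p t)) has_vector_derivative dd [p'] (dd [b] G) (p 0)) (at 0)"
    if "b \<in> B" for b
    by (rule has_vector_derivative_smooth_comp[OF smooth_b[OF that] p])
  have "((\<lambda>t. \<Sum>b\<in>B. of_real (w t \<bullet> b) * dd [b] G (p t)) has_vector_derivative
      (\<Sum>b\<in>B. of_real (w 0 \<bullet> b) * dd [p'] (dd [b] G) (p 0) + of_real (w' \<bullet> b) * dd [b] G (p 0))) (at 0)"
    by (intro has_vector_derivative_sum has_vector_derivative_mult coord along_p)
  moreover have "dd [p'] (dd [w 0] G) (p 0) = (\<Sum>b\<in>B. of_real (w 0 \<bullet> b) * dd [p'] (dd [b] G) (p 0))"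
  proof -
    have "dd [p'] (dd [w 0] G) (p 0) = dd [p'] (\<lambda>y. \<Sum>b\<in>B. of_real (w 0 \<bullet> b) * dd [b] G y) (p 0)"
      using expand w(1) p(1,3) by (intro dd_cong) auto
    also have "\<dots> = (\<Sum>b\<in>B. of_real (w 0 \<bullet> b) * dd [p'] (dd [b] G) (p 0))"
      using B(1) smooth_b p(1,3) by (rule dd_sum_fun)
    finally show ?thesis .
  qed
  ultimately show ?thesis
    using expand w(1,3) p(1) by (simp add: sum.distrib)
qed

end

section \<open>Exponential coordinates on Nbar\<close>

definition transl_dir :: "cmat \<Rightarrow> cmat \<Rightarrow> cmat" where
  "transl_dir M V = V + (1/2) *\<^sub>R bracket M V"

lemma nbar_transl_dir: "M \<in> nbar \<Longrightarrow> V \<in> nbar \<Longrightarrow> transl_dir M V \<in> nbar"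
  unfolding transl_dir_def
  by (intro subspace_add[OF subspace_nbar] subspace_scale[OF subspace_nbar] nbar_bracket)

lemma transl_dir_real_imag:
  "transl_dir M (A + cscale \<i> B) = transl_dir M A + cscale \<i> (transl_dir M B)"
  by (simp add: transl_dir_def bracket_linear_simps cscale_add vec_eq_iff scaleR_conv_of_real
      algebra_simps)

lemma exp_trunc_mult_line:
  assumes "lowering M" "lowering V"
  shows "exp_trunc M ** mexp (t *\<^sub>R V) = exp_trunc (M + t *\<^sub>R transl_dir M V)"
proof -
  have "exp_trunc M ** mexp (t *\<^sub>R V) = exp_trunc M ** exp_trunc (t *\<^sub>R V)"
    using assms by (simp add: mexp_lowering lowering_scaleR)
  also have "\<dots> = exp_trunc (M + t *\<^sub>R V + (1/2) *\<^sub>R bracket M (t *\<^sub>R V))"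
    using assms by (simp add: exp_trunc_mult lowering_scaleR)
  also have "M + t *\<^sub>R V + (1/2) *\<^sub>R bracket M (t *\<^sub>R V) = M + t *\<^sub>R transl_dir M V"
    by (simp add: transl_dir_def bracket_scaleR_right scaleR_add_right)
  finally show ?thesis .
qed

lemma Adinv_exp_line:
  assumes "lowering M" "lowering V"
  shows "Adinv_exp (M + t *\<^sub>R transl_dir M V) X = exp_trunc (- (t *\<^sub>R V)) ** Adinv_exp M X ** exp_trunc (t *\<^sub>R V)"
proof -
  have "M + t *\<^sub>R transl_dir M V = M + t *\<^sub>R V + (1/2) *\<^sub>R bracket M (t *\<^sub>R V)"
    by (simp add: transl_dir_def bracket_scaleR_right scaleR_add_right)
  then show ?thesis
    using Adinv_exp_mult[OF assms(1) lowering_scaleR[OF assms(2)]] by (simp only:)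
qed

lemma has_vector_derivative_exp_trunc_line:
  "((\<lambda>t. exp_trunc (t *\<^sub>R V)) has_vector_derivative V) (at 0)"
proof -
  have "exp_trunc (t *\<^sub>R V) = mat 1 + t *\<^sub>R V + (t * t / 2) *\<^sub>R (V ** V)" for t
    by (simp add: exp_trunc_def matrix_scaleR_left matrix_scaleR_right)
  moreover have "((\<lambda>t. mat 1 + t *\<^sub>R V + (t * t / 2) *\<^sub>R (V ** V)) has_vector_derivative
      0 + 1 *\<^sub>R V + (0 * 0 / 2 + 0 * 0 / 2) *\<^sub>R (V ** V)) (at 0)"
    by (intro has_vector_derivative_add has_vector_derivative_const has_vector_derivative_scaleR
        derivative_eq_intros) auto
  ultimately show ?thesis
    by simp
qed

lemma has_vector_derivative_conj_exp_trunc: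
  "((\<lambda>t. exp_trunc (- (t *\<^sub>R V)) ** K ** exp_trunc (t *\<^sub>R V)) has_vector_derivative bracket K V) (at 0)"
proof -
  have minus: "((\<lambda>t. exp_trunc (- (t *\<^sub>R V))) has_vector_derivative - V) (at 0)"
    using has_vector_derivative_exp_trunc_line[of "- V"] by simp
  have "((\<lambda>t. exp_trunc (- (t *\<^sub>R V)) ** K ** exp_trunc (t *\<^sub>R V)) has_vector_derivative
      exp_trunc (- (0 *\<^sub>R V)) ** K ** V + (exp_trunc (- (0 *\<^sub>R V)) ** 0 + (- V) ** K) ** exp_trunc (0 *\<^sub>R V)) (at 0)"
    by (intro bounded_bilinear.has_vector_derivative[OF bounded_bilinear_matrix_mult]
        minus has_vector_derivative_const has_vector_derivative_exp_trunc_line)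
  then show ?thesis
    by (simp add: exp_trunc_0 matrix_neg_left bracket_def)
qed

lemma has_vector_derivative_Adinv_exp_line:
  assumes "lowering M" "lowering V"
  shows "((\<lambda>t. Adinv_exp (M + t *\<^sub>R transl_dir M V) X) has_vector_derivative bracket (Adinv_exp M X) V) (at 0)"
  using has_vector_derivative_conj_exp_trunc[of V "Adinv_exp M X"] by (simp add: Adinv_exp_line[OF assms])

lemma transl_dir_commutator:
  assumes "lowering M" "lowering Z" "lowering Y"
  shows "U + (1/2) *\<^sub>R (bracket M U + bracket (transl_dir M Y) Z) - (1/2) *\<^sub>R bracket (transl_dir M Z) Y
    = transl_dir M (U - bracket Z Y)"
proof -
  have "bracket (transl_dir M Y) Z = - bracket Z Y" "bracket (transl_dir M Z) Y = bracket Z Y"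
    "bracket M (bracket Z Y) = 0"
    using assms lowering_bracket_bracket[of M Y Z] lowering_bracket_bracket[of M Z Y]
      lowering_bracket_bracket[of Z Y M]
    by (simp_all add: transl_dir_def bracket_linear_simps bracket_antisym[of Y Z]
        bracket_antisym[of M "bracket Z Y"])
  moreover have "(1/2) *\<^sub>R B + (1/2) *\<^sub>R B = B" for B :: cmat
    by (simp flip: scaleR_add_left)
  ultimately show ?thesis
    by (simp add: transl_dir_def bracket_diff_right scaleR_add_right scaleR_diff_right
        diff_add_eq_diff_diff_swap flip: diff_diff_eq)
qed

lemma has_vector_derivative_transl_dir:
  assumes "(m has_vector_derivative m') (at 0)" "(n has_vector_derivative n') (at 0)"
  shows "((\<lambda>t. transl_dir (m t) (n t)) has_vector_derivative
    n' + (1/2) *\<^sub>R (bracket (m 0) n' + bracket m' (n 0))) (at 0)"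
  unfolding transl_dir_def
  by (intro has_vector_derivative_add assms bounded_linear.has_vector_derivative[OF bounded_linear_scaleR_right]
      bounded_bilinear.has_vector_derivative[OF bounded_bilinear_bracket])

lemma has_vector_derivative_transl_dir_nbar_part_Adinv_exp:
  assumes "lowering M" "lowering V"
  shows "((\<lambda>t. transl_dir (M + t *\<^sub>R transl_dir M V) (nbar_part (Adinv_exp (M + t *\<^sub>R transl_dir M V) Y)))
    has_vector_derivative nbar_part (bracket (Adinv_exp M Y) V)
      + (1/2) *\<^sub>R (bracket M (nbar_part (bracket (Adinv_exp M Y) V)) + bracket (transl_dir M V) (nbar_part (Adinv_exp M Y))))
    (at 0)"
  using has_vector_derivative_transl_dir[OF has_vector_derivative_line
      bounded_linear.has_vector_derivative[OF bounded_linear_nbar_part has_vector_derivative_Adinv_exp_line[OF assms]]]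
  by simp

lemma PiOp_exp_trunc:
  assumes "N \<in> nbar" "X \<in> so8"
  shows "PiOp g0 s X g (exp_trunc N)
    = - s * dchi_lin (Adinv_exp N X) * g (exp_trunc N) - Rop g0 (nbar_part (Adinv_exp N X)) g (exp_trunc N)"
proof -
  have "lowering N"
    using assms(1) by (simp add: nbar_iff)
  then show ?thesis
    using Adinv_exp_so8[OF assms]
    by (simp add: PiOp_def Adinv_exp_trunc dchi_q_part dchi_so8)
qed

locale real_form =
  fixes g0 :: "cmat set"
  assumes real_form: "heis_real_form g0"
begin

lemma subspace_g0: "subspace g0"
  using real_form by (simp add: heis_real_form_def)

lemma g0_so8: "A \<in> g0 \<Longrightarrow> A \<in> so8"
  using real_form by (auto simp: heis_real_form_def)

lemma subspace_nbar_g0: "subspace (nbar \<inter> g0)"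
  by (rule subspace_inter[OF subspace_nbar subspace_g0])

lemma g0_bracket: "A \<in> g0 \<Longrightarrow> B \<in> g0 \<Longrightarrow> bracket A B \<in> g0"
  using real_form by (simp add: heis_real_form_def)

lemma nbar_g0_bracket: "A \<in> nbar \<inter> g0 \<Longrightarrow> B \<in> nbar \<inter> g0 \<Longrightarrow> bracket A B \<in> nbar \<inter> g0"
  by (simp add: nbar_bracket g0_bracket)

lemma nbar_g0_transl_dir: "M \<in> nbar \<inter> g0 \<Longrightarrow> V \<in> nbar \<inter> g0 \<Longrightarrow> transl_dir M V \<in> nbar \<inter> g0"
  unfolding transl_dir_def
  by (intro subspace_add[OF subspace_nbar_g0] subspace_scale[OF subspace_nbar_g0] nbar_g0_bracket)

lemma real_imag_unique:
  assumes "A \<in> g0" "B \<in> g0" "A' \<in> g0" "B' \<in> g0" "A + cscale \<i> B = A' + cscale \<i> B'"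
  shows "A = A'" "B = B'"
proof -
  have "\<i> * (B' $ k $ l - B $ k $ l) = A $ k $ l - A' $ k $ l" for k l
    using arg_cong[OF assms(5), of "\<lambda>M. M $ k $ l"] by (simp add: algebra_simps)
  then have "cscale \<i> (B' - B) = A - A'"
    by (simp add: vec_eq_iff)
  then have "cscale \<i> (B' - B) \<in> g0"
    using assms subspace_diff[OF subspace_g0] by simp
  moreover have "B' - B \<in> g0"
    using assms subspace_diff[OF subspace_g0] by simp
  ultimately have "B' - B = 0"
    using real_form unfolding heis_real_form_def by blast
  then show "B = B'" "A = A'"
    using assms(5) by simp_all
qed

lemma re0_im0:
  assumes "A \<in> g0" "B \<in> g0"
  shows "re0 g0 (A + cscale \<i> B) = A" "im0 g0 (A + cscale \<i> B) = B"
proof -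
  have "re0 g0 (A + cscale \<i> B) \<in> g0 \<and> (\<exists>B'\<in>g0. A + cscale \<i> B = re0 g0 (A + cscale \<i> B) + cscale \<i> B')"
    unfolding re0_def by (rule someI[of _ A]) (use assms in blast)
  then show "re0 g0 (A + cscale \<i> B) = A"
    using real_imag_unique assms by metis
  have "im0 g0 (A + cscale \<i> B) \<in> g0 \<and> (\<exists>A'\<in>g0. A + cscale \<i> B = A' + cscale \<i> (im0 g0 (A + cscale \<i> B)))"
    unfolding im0_def by (rule someI[of _ B]) (use assms in blast)
  then show "im0 g0 (A + cscale \<i> B) = B"
    using real_imag_unique assms by metis
qed

lemma Rop_real_imag:
  "A \<in> g0 \<Longrightarrow> B \<in> g0 \<Longrightarrow> Rop g0 (A + cscale \<i> B) f n = Rreal A f n + \<i> * Rreal B f n"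
  by (simp add: Rop_def re0_im0)

lemma real_imag_parts:
  assumes "complexifies g0 T" "Y \<in> T"
  obtains A B where "A \<in> T \<inter> g0" "B \<in> T \<inter> g0" "Y = A + cscale \<i> B"
  using assms by (auto simp: complexifies_def)

lemma real_imag_parts_so8:
  assumes "Y \<in> so8"
  obtains A B where "A \<in> g0" "B \<in> g0" "Y = A + cscale \<i> B"
proof -
  have "complexifies g0 so8"
    using real_form by (simp add: heis_real_form_def)
  then show ?thesis
    using assms that by (auto simp: complexifies_def)
qed

lemma real_imag_parts_nbar:
  assumes "Y \<in> nbar"
  obtains A B where "A \<in> nbar \<inter> g0" "B \<in> nbar \<inter> g0" "Y = A + cscale \<i> B"
proof -
  have "complexifies g0 nbar"
    using real_form by (simp add: heis_real_form_def)
  then show ?thesis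
    using assms that by (auto simp: complexifies_def)
qed

text \<open>Splitting A into its nbar and q components over the complexification forces the
  imaginary part of nbar_part A into nbar \<inter> qalg = 0.\<close>

lemma nbar_part_g0:
  assumes "A \<in> g0"
  shows "nbar_part A \<in> g0"
proof -
  have A: "A \<in> so8"
    using assms by (rule g0_so8)
  obtain B C where B: "B \<in> nbar \<inter> g0" and C: "C \<in> nbar \<inter> g0" and BC: "nbar_part A = B + cscale \<i> C"
    using real_imag_parts[of nbar "nbar_part A"] real_form nbar_part_nbar[OF A]
    by (auto simp: heis_real_form_def)
  obtain B' C' where B': "B' \<in> qalg \<inter> g0" and C': "C' \<in> qalg \<inter> g0" and BC': "q_part A = B' + cscale \<i> C'"
    using real_imag_parts[of qalg "q_part A"] real_form q_part_qalg[OF A]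
    by (auto simp: heis_real_form_def)
  have "A + cscale \<i> 0 = (B + B') + cscale \<i> (C + C')"
    using nbar_part_plus_q_part[of A] BC BC' by (simp add: cscale_add algebra_simps)
  then have "0 = C + C'"
    using real_imag_unique(2)[of A 0 "B + B'" "C + C'"] assms B B' C C'
      subspace_add[OF subspace_g0] subspace_0[OF subspace_g0] by auto
  then have "C \<in> qalg"
    using qalg_neg C' by (simp add: eq_neg_iff_add_eq_0[symmetric])
  then have "C = 0"
    using nbar_inter_qalg C by simp
  then show ?thesis
    using BC B by simp
qed

lemma nbar_part_nbar_g0: "A \<in> g0 \<Longrightarrow> nbar_part A \<in> nbar \<inter> g0"
  by (simp add: nbar_part_g0 nbar_part_nbar g0_so8)

lemma Adinv_exp_g0:
  assumes "N \<in> nbar \<inter> g0" "X \<in> g0"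
  shows "Adinv_exp N X \<in> g0"
proof -
  have "lowering N"
    using assms(1) by (simp add: nbar_iff)
  with assms show ?thesis
    unfolding Adinv_exp_expansion[OF \<open>lowering N\<close>]
    by (intro subspace_add[OF subspace_g0] subspace_scale[OF subspace_g0] g0_bracket) auto
qed

end

section \<open>The operators R and Pi in exponential coordinates\<close>

definition cdd :: "cmat set \<Rightarrow> (cmat \<Rightarrow> complex) \<Rightarrow> cmat \<Rightarrow> cmat \<Rightarrow> complex" where
  "cdd g0 G x W = dd [re0 g0 W] G x + \<i> * dd [im0 g0 W] G x"

context real_form
begin

lemma cdd_real_imag:
  "A \<in> g0 \<Longrightarrow> B \<in> g0 \<Longrightarrow> cdd g0 G x (A + cscale \<i> B) = dd [A] G x + \<i> * dd [B] G x"
  by (simp add: cdd_def re0_im0)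

lemma Rreal_exp_trunc:
  assumes "M \<in> nbar \<inter> g0" "V \<in> nbar \<inter> g0"
  shows "Rreal V f (exp_trunc M) = dd [transl_dir M V] (f \<circ> mexp) M"
proof -
  have "M + t *\<^sub>R transl_dir M V \<in> nbar" for t
    using subspace_line[OF subspace_nbar_g0 assms(1) nbar_g0_transl_dir[OF assms]] by simp
  then have "f (exp_trunc M ** mexp (t *\<^sub>R V)) = (f \<circ> mexp) (M + t *\<^sub>R transl_dir M V)" for t
    using assms by (simp add: exp_trunc_mult_line mexp_lowering nbar_iff)
  then show ?thesis
    by (simp add: Rreal_def dd_single)
qed

lemma Rop_exp_trunc:
  assumes "M \<in> nbar \<inter> g0" "W \<in> nbar"
  shows "Rop g0 W f (exp_trunc M) = cdd g0 (f \<circ> mexp) M (transl_dir M W)"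
proof -
  obtain A B where A: "A \<in> nbar \<inter> g0" and B: "B \<in> nbar \<inter> g0" and W: "W = A + cscale \<i> B"
    using real_imag_parts_nbar[OF assms(2)] .
  have "transl_dir M A \<in> g0" "transl_dir M B \<in> g0"
    using nbar_g0_transl_dir[OF assms(1)] A B by auto
  then show ?thesis
    using A B by (simp add: W Rop_real_imag Rreal_exp_trunc[OF assms(1)] transl_dir_real_imag
        cdd_real_imag)
qed

lemma PiOp_exp_trunc_real_imag:
  assumes N: "N \<in> nbar \<inter> g0" and "X1 \<in> g0" "X2 \<in> g0"
  shows "PiOp g0 s (X1 + cscale \<i> X2) f (exp_trunc N)
    = - s * (dchi_lin (Adinv_exp N (X1 + cscale \<i> X2)) * (f \<circ> mexp) N)
      - cdd g0 (f \<circ> mexp) N (transl_dir N (nbar_part (Adinv_exp N X1))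
        + cscale \<i> (transl_dir N (nbar_part (Adinv_exp N X2))))"
proof -
  have "X1 + cscale \<i> X2 \<in> so8"
    using assms by (intro subspace_add[OF subspace_so8] so8_cscale g0_so8)
  moreover have "nbar_part (Adinv_exp N (X1 + cscale \<i> X2)) \<in> nbar"
    using N \<open>X1 + cscale \<i> X2 \<in> so8\<close> by (simp add: Adinv_exp_so8 nbar_part_nbar)
  ultimately show ?thesis
    using N by (simp add: PiOp_exp_trunc Rop_exp_trunc Adinv_exp_add Adinv_exp_cscale nbar_part_add
        nbar_part_cscale transl_dir_real_imag mexp_lowering nbar_iff mult.assoc)
qed

context
  fixes G :: "cmat \<Rightarrow> complex"
  assumes smooth: "smooth_on_sub (nbar \<inter> g0) G"
begin

lemma cdd_add:
  assumes x: "x \<in> nbar \<inter> g0" and "V \<in> nbar" "W \<in> nbar"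
  shows "cdd g0 G x (V + W) = cdd g0 G x V + cdd g0 G x W"
proof -
  obtain A B where A: "A \<in> nbar \<inter> g0" and B: "B \<in> nbar \<inter> g0" and V: "V = A + cscale \<i> B"
    using real_imag_parts_nbar[OF assms(2)] .
  obtain C D where C: "C \<in> nbar \<inter> g0" and D: "D \<in> nbar \<inter> g0" and W: "W = C + cscale \<i> D"
    using real_imag_parts_nbar[OF assms(3)] .
  have "V + W = (A + C) + cscale \<i> (B + D)"
    by (simp add: V W cscale_add algebra_simps)
  moreover have "A + C \<in> nbar \<inter> g0" "B + D \<in> nbar \<inter> g0"
    using A B C D subspace_add[OF subspace_nbar_g0] by auto
  ultimately have "cdd g0 G x (V + W) = dd [A + C] G x + \<i> * dd [B + D] G x"
    by (simp add: cdd_real_imag)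
  also have "\<dots> = (dd [A] G x + \<i> * dd [B] G x) + (dd [C] G x + \<i> * dd [D] G x)"
    using A B C D by (simp add: dd_add[OF subspace_nbar_g0 smooth x] algebra_simps)
  also have "\<dots> = cdd g0 G x V + cdd g0 G x W"
    using A B C D by (simp add: V W cdd_real_imag)
  finally show ?thesis .
qed

lemma cdd_cscale_i:
  assumes x: "x \<in> nbar \<inter> g0" and "V \<in> nbar"
  shows "cdd g0 G x (cscale \<i> V) = \<i> * cdd g0 G x V"
proof -
  obtain A B where A: "A \<in> nbar \<inter> g0" and B: "B \<in> nbar \<inter> g0" and V: "V = A + cscale \<i> B"
    using real_imag_parts_nbar[OF assms(2)] .
  have iV: "cscale \<i> V = (- 1) *\<^sub>R B + cscale \<i> A"
    by (simp add: V vec_eq_iff algebra_simps)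
  have "(- 1) *\<^sub>R B \<in> nbar \<inter> g0"
    using B subspace_scale[OF subspace_nbar_g0] by blast
  then have "cdd g0 G x (cscale \<i> V) = dd [(- 1) *\<^sub>R B] G x + \<i> * dd [A] G x"
    unfolding iV using A by (intro cdd_real_imag) auto
  also have "\<dots> = \<i> * (dd [A] G x + \<i> * dd [B] G x)"
    using B dd_scaleR[OF subspace_nbar_g0 smooth x, of B "- 1"] by (simp add: algebra_simps)
  also have "\<dots> = \<i> * cdd g0 G x V"
    using A B by (simp add: V cdd_real_imag)
  finally show ?thesis .
qed

lemma cdd_neg:
  assumes x: "x \<in> nbar \<inter> g0" and "V \<in> nbar"
  shows "cdd g0 G x (- V) = - cdd g0 G x V"
proof -
  have "cscale \<i> (cscale \<i> V) = - V"
    by (simp add: vec_eq_iff mult.assoc[symmetric])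
  then show ?thesis
    using cdd_cscale_i[OF x nbar_cscale[OF assms(2), of \<i>]] cdd_cscale_i[OF x assms(2)] by simp
qed

lemma cdd_diff:
  assumes x: "x \<in> nbar \<inter> g0" and "V \<in> nbar" "W \<in> nbar"
  shows "cdd g0 G x (V - W) = cdd g0 G x V - cdd g0 G x W"
  using cdd_add[OF x assms(2) subspace_neg[OF subspace_nbar assms(3)]] cdd_neg[OF x assms(3)] by simp

lemma has_vector_derivative_cdd_along_curve:
  assumes p: "\<And>t. p t \<in> nbar \<inter> g0" "(p has_vector_derivative p') (at 0)" "p' \<in> nbar \<inter> g0"
    and w: "\<And>t. w1 t \<in> nbar \<inter> g0" "(w1 has_vector_derivative w1') (at 0)" "w1' \<in> nbar \<inter> g0"
      "\<And>t. w2 t \<in> nbar \<inter> g0" "(w2 has_vector_derivative w2') (at 0)" "w2' \<in> nbar \<inter> g0"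
  shows "((\<lambda>t. cdd g0 G (p t) (w1 t + cscale \<i> (w2 t))) has_vector_derivative
      dd [p'] (\<lambda>y. cdd g0 G y (w1 0 + cscale \<i> (w2 0))) (p 0) + cdd g0 G (p 0) (w1' + cscale \<i> w2'))
      (at 0)"
proof -
  have real_imag: "cdd g0 G y (w1 t + cscale \<i> (w2 t)) = dd [w1 t] G y + \<i> * dd [w2 t] G y" for y t
    using w(1,4) by (simp add: cdd_real_imag)
  have "((\<lambda>t. dd [w1 t] G (p t) + \<i> * dd [w2 t] G (p t)) has_vector_derivative
      (dd [p'] (dd [w1 0] G) (p 0) + dd [w1'] G (p 0))
      + \<i> * (dd [p'] (dd [w2 0] G) (p 0) + dd [w2'] G (p 0))) (at 0)"
    by (intro has_vector_derivative_add has_vector_derivative_mult_right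
        has_vector_derivative_dd_along_curve[OF subspace_nbar_g0 smooth p] w)
  moreover have "dd [p'] (\<lambda>y. dd [w1 0] G y + \<i> * dd [w2 0] G y) (p 0)
      = dd [p'] (dd [w1 0] G) (p 0) + \<i> * dd [p'] (dd [w2 0] G) (p 0)"
    using w(1,4) by (intro dd_linear_combination[OF subspace_nbar_g0] smooth_on_sub_dd[OF subspace_nbar_g0]
        smooth p(1,3))
  ultimately show ?thesis
    using w(3,6) by (simp add: real_imag cdd_real_imag algebra_simps)
qed

lemma cdd_commute:
  assumes x: "x \<in> nbar \<inter> g0" and "P \<in> nbar" "Q \<in> nbar"
  shows "cdd g0 (\<lambda>y. cdd g0 G y Q) x P = cdd g0 (\<lambda>y. cdd g0 G y P) x Q"
proof -
  obtain P1 P2 where P1: "P1 \<in> nbar \<inter> g0" and P2: "P2 \<in> nbar \<inter> g0" and P: "P = P1 + cscale \<i> P2"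
    using real_imag_parts_nbar[OF assms(2)] .
  obtain Q1 Q2 where Q1: "Q1 \<in> nbar \<inter> g0" and Q2: "Q2 \<in> nbar \<inter> g0" and Q: "Q = Q1 + cscale \<i> Q2"
    using real_imag_parts_nbar[OF assms(3)] .
  have expand: "cdd g0 (\<lambda>y. cdd g0 G y (B1 + cscale \<i> B2)) x (A1 + cscale \<i> A2)
      = (dd [A1] (dd [B1] G) x + \<i> * dd [A1] (dd [B2] G) x)
        + \<i> * (dd [A2] (dd [B1] G) x + \<i> * dd [A2] (dd [B2] G) x)"
    if "A1 \<in> nbar \<inter> g0" "A2 \<in> nbar \<inter> g0" "B1 \<in> nbar \<inter> g0" "B2 \<in> nbar \<inter> g0" for A1 A2 B1 B2
    using that x by (simp add: cdd_real_imag dd_linear_combination[OF subspace_nbar_g0]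
        smooth_on_sub_dd[OF subspace_nbar_g0 smooth])
  have commute: "dd [A] (dd [B] G) x = dd [B] (dd [A] G) x"
    if "A \<in> nbar \<inter> g0" "B \<in> nbar \<inter> g0" for A B
    using dd_commute[OF subspace_nbar_g0 smooth x that] .
  show ?thesis
    unfolding P Q expand[OF P1 P2 Q1 Q2] expand[OF Q1 Q2 P1 P2]
    using P1 P2 Q1 Q2 by (simp add: commute[of P1] commute[of P2] algebra_simps)
qed

end

context
  fixes f :: "cmat \<Rightarrow> complex"
  assumes smooth_f: "smooth_Nbar0 g0 f"
begin

lemma smooth_chart: "smooth_on_sub (nbar \<inter> g0) (f \<circ> mexp)"
  using smooth_f by (simp add: smooth_Nbar0_def)

lemma Rreal_Rop_exp_trunc:
  assumes M: "M \<in> nbar \<inter> g0" and V: "V \<in> nbar \<inter> g0" and "W \<in> nbar"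
  shows "Rreal V (Rop g0 W f) (exp_trunc M)
    = dd [transl_dir M V] (\<lambda>y. cdd g0 (f \<circ> mexp) y (transl_dir M W)) M
      + cdd g0 (f \<circ> mexp) M ((1/2) *\<^sub>R bracket (transl_dir M V) W)"
proof -
  obtain W1 W2 where W1: "W1 \<in> nbar \<inter> g0" and W2: "W2 \<in> nbar \<inter> g0" and W: "W = W1 + cscale \<i> W2"
    using real_imag_parts_nbar[OF \<open>W \<in> nbar\<close>] .
  define P where "P = transl_dir M V"
  have P: "P \<in> nbar \<inter> g0"
    unfolding P_def using M V by (rule nbar_g0_transl_dir)
  define m where "m t = M + t *\<^sub>R P" for t
  have m: "m t \<in> nbar \<inter> g0" for t
    unfolding m_def by (rule subspace_line[OF subspace_nbar_g0 M P])
  have dm: "(m has_vector_derivative P) (at 0)" and m0: "m 0 = M"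
    by (simp_all add: m_def[abs_def] has_vector_derivative_line)
  define w where "w Y t = transl_dir (m t) Y" for Y t
  have w: "\<And>t. w Y t \<in> nbar \<inter> g0" "(w Y has_vector_derivative (1/2) *\<^sub>R bracket P Y) (at 0)"
    "(1/2) *\<^sub>R bracket P Y \<in> nbar \<inter> g0"
    if "Y \<in> nbar \<inter> g0" for Y
  proof -
    show "w Y t \<in> nbar \<inter> g0" for t
      unfolding w_def using m that by (rule nbar_g0_transl_dir)
    show "(w Y has_vector_derivative (1/2) *\<^sub>R bracket P Y) (at 0)"
      using has_vector_derivative_transl_dir[OF dm has_vector_derivative_const, of Y]
      by (simp add: w_def[abs_def] bracket_def)
    show "(1/2) *\<^sub>R bracket P Y \<in> nbar \<inter> g0"
      using nbar_g0_bracket[OF P that] by (rule subspace_scale[OF subspace_nbar_g0])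
  qed
  have Rop_line: "Rop g0 W f (exp_trunc M ** mexp (t *\<^sub>R V))
      = cdd g0 (f \<circ> mexp) (m t) (w W1 t + cscale \<i> (w W2 t))" for t
    using M V Rop_exp_trunc[OF m \<open>W \<in> nbar\<close>]
    by (simp add: m_def P_def w_def W exp_trunc_mult_line transl_dir_real_imag nbar_iff)
  have "((\<lambda>t. cdd g0 (f \<circ> mexp) (m t) (w W1 t + cscale \<i> (w W2 t))) has_vector_derivative
      dd [P] (\<lambda>y. cdd g0 (f \<circ> mexp) y (transl_dir M W)) M
      + cdd g0 (f \<circ> mexp) M ((1/2) *\<^sub>R bracket P W)) (at 0)"
    using has_vector_derivative_cdd_along_curve[OF smooth_chart m dm P w[OF W1] w[OF W2]]
    by (simp add: w_def m0 W transl_dir_real_imag bracket_linear_simps cscale_scaleR scaleR_add_right)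
  then show ?thesis
    unfolding Rreal_def Rop_line by (simp add: P_def vector_derivative_at)
qed

lemma Rop_Rop_exp_trunc:
  assumes M: "M \<in> nbar \<inter> g0" and "Z \<in> nbar" "W \<in> nbar"
  shows "Rop g0 Z (Rop g0 W f) (exp_trunc M)
    = cdd g0 (\<lambda>y. cdd g0 (f \<circ> mexp) y (transl_dir M W)) M (transl_dir M Z)
      + cdd g0 (f \<circ> mexp) M ((1/2) *\<^sub>R bracket (transl_dir M Z) W)"
proof -
  obtain Z1 Z2 where Z1: "Z1 \<in> nbar \<inter> g0" and Z2: "Z2 \<in> nbar \<inter> g0" and Z: "Z = Z1 + cscale \<i> Z2"
    using real_imag_parts_nbar[OF \<open>Z \<in> nbar\<close>] .
  define P1 P2 where "P1 = transl_dir M Z1" and "P2 = transl_dir M Z2"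
  have P: "P1 \<in> nbar \<inter> g0" "P2 \<in> nbar \<inter> g0"
    unfolding P1_def P2_def using nbar_g0_transl_dir[OF M] Z1 Z2 by blast+
  have half: "(1/2) *\<^sub>R bracket P1 W \<in> nbar" "(1/2) *\<^sub>R bracket P2 W \<in> nbar"
    using P \<open>W \<in> nbar\<close> by (auto intro: subspace_scale[OF subspace_nbar] nbar_bracket)
  have "Rop g0 Z (Rop g0 W f) (exp_trunc M)
      = Rreal Z1 (Rop g0 W f) (exp_trunc M) + \<i> * Rreal Z2 (Rop g0 W f) (exp_trunc M)"
    using Z1 Z2 by (simp add: Z Rop_real_imag)
  also have "\<dots> = cdd g0 (\<lambda>y. cdd g0 (f \<circ> mexp) y (transl_dir M W)) M (P1 + cscale \<i> P2)
      + (cdd g0 (f \<circ> mexp) M ((1/2) *\<^sub>R bracket P1 W)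
        + \<i> * cdd g0 (f \<circ> mexp) M ((1/2) *\<^sub>R bracket P2 W))"
    using P by (simp add: Rreal_Rop_exp_trunc[OF M Z1 \<open>W \<in> nbar\<close>] Rreal_Rop_exp_trunc[OF M Z2 \<open>W \<in> nbar\<close>]
        P1_def P2_def cdd_real_imag algebra_simps)
  also have "\<dots> = cdd g0 (\<lambda>y. cdd g0 (f \<circ> mexp) y (transl_dir M W)) M (P1 + cscale \<i> P2)
      + cdd g0 (f \<circ> mexp) M ((1/2) *\<^sub>R bracket P1 W + cscale \<i> ((1/2) *\<^sub>R bracket P2 W))"
    using half by (simp add: cdd_add[OF smooth_chart M] cdd_cscale_i[OF smooth_chart M] nbar_cscale)
  also have "P1 + cscale \<i> P2 = transl_dir M Z"
    by (simp add: P1_def P2_def Z transl_dir_real_imag)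
  also have "(1/2) *\<^sub>R bracket P1 W + cscale \<i> ((1/2) *\<^sub>R bracket P2 W)
      = (1/2) *\<^sub>R bracket (transl_dir M Z) W"
    by (simp add: P1_def P2_def Z transl_dir_real_imag bracket_linear_simps cscale_scaleR
        scaleR_add_right)
  finally show ?thesis .
qed

lemma Rreal_PiOp_exp_trunc:
  assumes M: "M \<in> nbar \<inter> g0" and V: "V \<in> nbar \<inter> g0" and "X \<in> so8"
  defines "A \<equiv> Adinv_exp M X" and "Q \<equiv> transl_dir M V"
  defines "U \<equiv> nbar_part (bracket A V)"
  shows "Rreal V (PiOp g0 s X f) (exp_trunc M)
    = - s * (dchi_lin (bracket A V) * (f \<circ> mexp) M + dchi_lin A * dd [Q] (f \<circ> mexp) M)
      - (dd [Q] (\<lambda>y. cdd g0 (f \<circ> mexp) y (transl_dir M (nbar_part A))) M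
        + cdd g0 (f \<circ> mexp) M (U + (1/2) *\<^sub>R (bracket M U + bracket Q (nbar_part A))))"
proof -
  obtain X1 X2 where X1: "X1 \<in> g0" and X2: "X2 \<in> g0" and X: "X = X1 + cscale \<i> X2"
    using real_imag_parts_so8[OF \<open>X \<in> so8\<close>] .
  have Q: "Q \<in> nbar \<inter> g0"
    unfolding Q_def using M V by (rule nbar_g0_transl_dir)
  define m where "m t = M + t *\<^sub>R Q" for t
  have m: "m t \<in> nbar \<inter> g0" for t
    unfolding m_def by (rule subspace_line[OF subspace_nbar_g0 M Q])
  have dm: "(m has_vector_derivative Q) (at 0)" and m0: "m 0 = M"
    by (simp_all add: m_def[abs_def] has_vector_derivative_line)
  have dAd: "((\<lambda>t. Adinv_exp (m t) Y) has_vector_derivative bracket (Adinv_exp M Y) V) (at 0)" for Y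
    using M V by (simp add: m_def Q_def has_vector_derivative_Adinv_exp_line nbar_iff)
  define w where "w Y t = transl_dir (m t) (nbar_part (Adinv_exp (m t) Y))" for Y t
  define w' where "w' Y = nbar_part (bracket (Adinv_exp M Y) V)
    + (1/2) *\<^sub>R (bracket M (nbar_part (bracket (Adinv_exp M Y) V)) + bracket Q (nbar_part (Adinv_exp M Y)))" for Y
  have w: "\<And>t. w Y t \<in> nbar \<inter> g0" "(w Y has_vector_derivative w' Y) (at 0)" "w' Y \<in> nbar \<inter> g0"
    if "Y \<in> g0" for Y
  proof -
    show "w Y t \<in> nbar \<inter> g0" for t
      unfolding w_def using m Adinv_exp_g0[OF m that] by (intro nbar_g0_transl_dir nbar_part_nbar_g0)
    show "(w Y has_vector_derivative w' Y) (at 0)"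
      unfolding w_def[abs_def] w'_def m_def Q_def
      using M V by (simp add: has_vector_derivative_transl_dir_nbar_part_Adinv_exp nbar_iff)
    show "w' Y \<in> nbar \<inter> g0"
      unfolding w'_def using M Q V Adinv_exp_g0[OF M that]
      by (intro subspace_add[OF subspace_nbar_g0] subspace_scale[OF subspace_nbar_g0]
          nbar_g0_bracket nbar_part_nbar_g0 g0_bracket) auto
  qed
  have PiOp_line: "PiOp g0 s X f (exp_trunc M ** mexp (t *\<^sub>R V))
      = - s * (dchi_lin (Adinv_exp (m t) X) * (f \<circ> mexp) (m t))
        - cdd g0 (f \<circ> mexp) (m t) (w X1 t + cscale \<i> (w X2 t))" for t
    using M V PiOp_exp_trunc_real_imag[OF m X1 X2]
    by (simp add: X w_def m_def Q_def exp_trunc_mult_line nbar_iff)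
  have PiOp_deriv: "((\<lambda>t. - s * (dchi_lin (Adinv_exp (m t) X) * (f \<circ> mexp) (m t))
        - cdd g0 (f \<circ> mexp) (m t) (w X1 t + cscale \<i> (w X2 t))) has_vector_derivative
      - s * (dchi_lin (Adinv_exp (m 0) X) * dd [Q] (f \<circ> mexp) (m 0)
        + dchi_lin (bracket (Adinv_exp M X) V) * (f \<circ> mexp) (m 0))
      - (dd [Q] (\<lambda>y. cdd g0 (f \<circ> mexp) y (w X1 0 + cscale \<i> (w X2 0))) (m 0)
        + cdd g0 (f \<circ> mexp) (m 0) (w' X1 + cscale \<i> (w' X2)))) (at 0)"
    by (intro has_vector_derivative_diff has_vector_derivative_mult_right has_vector_derivative_mult
        bounded_linear.has_vector_derivative[OF bounded_linear_dchi_lin dAd]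
        has_vector_derivative_smooth_comp[OF subspace_nbar_g0 smooth_chart m dm Q]
        has_vector_derivative_cdd_along_curve[OF smooth_chart m dm Q] w X1 X2)
  have "w X1 0 + cscale \<i> (w X2 0) = transl_dir M (nbar_part A)"
    by (simp add: w_def m0 A_def X Adinv_exp_add Adinv_exp_cscale nbar_part_add nbar_part_cscale
        transl_dir_real_imag)
  moreover have "w' X1 + cscale \<i> (w' X2) = U + (1/2) *\<^sub>R (bracket M U + bracket Q (nbar_part A))"
    by (simp add: w'_def U_def A_def X Adinv_exp_add Adinv_exp_cscale nbar_part_add nbar_part_cscale
        bracket_linear_simps cscale_add cscale_scaleR scaleR_add_right algebra_simps)
  ultimately show ?thesis
    unfolding Rreal_def PiOp_line vector_derivative_at[OF PiOp_deriv]
    by (simp add: m0 A_def algebra_simps)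
qed

lemma Rop_PiOp_exp_trunc:
  assumes M: "M \<in> nbar \<inter> g0" and "Y \<in> nbar" "X \<in> so8"
  defines "A \<equiv> Adinv_exp M X" and "Q \<equiv> transl_dir M Y"
  defines "U \<equiv> nbar_part (bracket A Y)"
  shows "Rop g0 Y (PiOp g0 s X f) (exp_trunc M)
    = - s * (dchi_lin (bracket A Y) * (f \<circ> mexp) M + dchi_lin A * cdd g0 (f \<circ> mexp) M Q)
      - (cdd g0 (\<lambda>y. cdd g0 (f \<circ> mexp) y (transl_dir M (nbar_part A))) M Q
        + cdd g0 (f \<circ> mexp) M (U + (1/2) *\<^sub>R (bracket M U + bracket Q (nbar_part A))))"
proof -
  obtain Y1 Y2 where Y1: "Y1 \<in> nbar \<inter> g0" and Y2: "Y2 \<in> nbar \<inter> g0" and Y: "Y = Y1 + cscale \<i> Y2"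
    using real_imag_parts_nbar[OF \<open>Y \<in> nbar\<close>] .
  define Q1 Q2 where "Q1 = transl_dir M Y1" and "Q2 = transl_dir M Y2"
  have Qk: "Q1 \<in> nbar \<inter> g0" "Q2 \<in> nbar \<inter> g0"
    unfolding Q1_def Q2_def using nbar_g0_transl_dir[OF M] Y1 Y2 by blast+
  have Q: "Q = Q1 + cscale \<i> Q2"
    by (simp add: Q_def Q1_def Q2_def Y transl_dir_real_imag)
  define R where "R V = nbar_part (bracket A V) + (1/2) *\<^sub>R (bracket M (nbar_part (bracket A V))
    + bracket (transl_dir M V) (nbar_part A))" for V
  have R: "R V \<in> nbar" if "V \<in> nbar" for V
    unfolding R_def A_def using M that Adinv_exp_so8 \<open>X \<in> so8\<close>
    by (intro subspace_add[OF subspace_nbar] subspace_scale[OF subspace_nbar] nbar_bracket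
        nbar_part_nbar so8_bracket nbar_transl_dir) (auto simp: nbar_iff)
  have "Rop g0 Y (PiOp g0 s X f) (exp_trunc M)
      = Rreal Y1 (PiOp g0 s X f) (exp_trunc M) + \<i> * Rreal Y2 (PiOp g0 s X f) (exp_trunc M)"
    using Y1 Y2 by (simp add: Y Rop_real_imag)
  also have "\<dots> = - s * ((dchi_lin (bracket A Y1) + \<i> * dchi_lin (bracket A Y2)) * (f \<circ> mexp) M
        + dchi_lin A * (dd [Q1] (f \<circ> mexp) M + \<i> * dd [Q2] (f \<circ> mexp) M))
      - ((dd [Q1] (\<lambda>y. cdd g0 (f \<circ> mexp) y (transl_dir M (nbar_part A))) M
          + \<i> * dd [Q2] (\<lambda>y. cdd g0 (f \<circ> mexp) y (transl_dir M (nbar_part A))) M)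
        + (cdd g0 (f \<circ> mexp) M (R Y1) + \<i> * cdd g0 (f \<circ> mexp) M (R Y2)))"
    unfolding Rreal_PiOp_exp_trunc[OF M Y1 \<open>X \<in> so8\<close>] Rreal_PiOp_exp_trunc[OF M Y2 \<open>X \<in> so8\<close>]
    by (simp add: R_def A_def Q1_def Q2_def algebra_simps)
  also have "\<dots> = - s * (dchi_lin (bracket A Y) * (f \<circ> mexp) M + dchi_lin A * cdd g0 (f \<circ> mexp) M Q)
      - (cdd g0 (\<lambda>y. cdd g0 (f \<circ> mexp) y (transl_dir M (nbar_part A))) M Q
        + cdd g0 (f \<circ> mexp) M (R Y1 + cscale \<i> (R Y2)))"
    using Qk Y1 Y2 R
    by (simp add: Q Y cdd_real_imag cdd_add[OF smooth_chart M] cdd_cscale_i[OF smooth_chart M]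
        nbar_cscale bracket_linear_simps dchi_lin_add dchi_lin_cscale)
  also have "R Y1 + cscale \<i> (R Y2) = U + (1/2) *\<^sub>R (bracket M U + bracket Q (nbar_part A))"
    by (simp add: R_def U_def Q Q1_def Q2_def Y bracket_linear_simps nbar_part_add nbar_part_cscale
        cscale_add cscale_scaleR scaleR_add_right algebra_simps)
  finally show ?thesis .
qed

lemma PiOp_Rop_exp_trunc:
  assumes M: "M \<in> nbar \<inter> g0" and "Y \<in> nbar" "X \<in> so8"
  defines "A \<equiv> Adinv_exp M X" and "Q \<equiv> transl_dir M Y"
  defines "P \<equiv> transl_dir M (nbar_part A)"
  shows "PiOp g0 s X (Rop g0 Y f) (exp_trunc M)
    = - s * dchi_lin A * cdd g0 (f \<circ> mexp) M Q
      - (cdd g0 (\<lambda>y. cdd g0 (f \<circ> mexp) y Q) M P + cdd g0 (f \<circ> mexp) M ((1/2) *\<^sub>R bracket P Y))"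
proof -
  have "M \<in> nbar" "nbar_part A \<in> nbar"
    using M Adinv_exp_so8 \<open>X \<in> so8\<close> by (auto simp: A_def nbar_part_nbar)
  then show ?thesis
    unfolding PiOp_exp_trunc[OF \<open>M \<in> nbar\<close> \<open>X \<in> so8\<close>] Rop_exp_trunc[OF M \<open>Y \<in> nbar\<close>]
      A_def[symmetric] Rop_Rop_exp_trunc[OF M \<open>nbar_part A \<in> nbar\<close> \<open>Y \<in> nbar\<close>]
    by (simp add: P_def Q_def)
qed

lemma cdd_transl_dir_commutator:
  assumes M: "M \<in> nbar \<inter> g0" and "Z \<in> nbar" "Y \<in> nbar" "U \<in> nbar"
  shows "cdd g0 (f \<circ> mexp) M (U + (1/2) *\<^sub>R (bracket M U + bracket (transl_dir M Y) Z))
      - cdd g0 (f \<circ> mexp) M ((1/2) *\<^sub>R bracket (transl_dir M Z) Y)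
    = Rop g0 (U - bracket Z Y) f (exp_trunc M)"
proof -
  have "M \<in> nbar"
    using M by simp
  then have "U + (1/2) *\<^sub>R (bracket M U + bracket (transl_dir M Y) Z) \<in> nbar"
    "(1/2) *\<^sub>R bracket (transl_dir M Z) Y \<in> nbar" "U - bracket Z Y \<in> nbar"
    using assms by (auto intro!: subspace_add[OF subspace_nbar] subspace_diff[OF subspace_nbar]
        subspace_scale[OF subspace_nbar] nbar_bracket nbar_transl_dir)
  moreover have "U + (1/2) *\<^sub>R (bracket M U + bracket (transl_dir M Y) Z)
      - (1/2) *\<^sub>R bracket (transl_dir M Z) Y = transl_dir M (U - bracket Z Y)"
    using \<open>M \<in> nbar\<close> assms by (intro transl_dir_commutator) (auto simp: nbar_iff)
  ultimately show ?thesis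
    using Rop_exp_trunc[OF M] by (simp flip: cdd_diff[OF smooth_chart M])
qed

lemma commutator_PiOp_Rop:
  assumes "nb \<in> Nbar0 g0" "X \<in> so8" "Y \<in> nbar"
  shows "PiOp g0 s X (Rop g0 Y f) nb - Rop g0 Y (PiOp g0 s X f) nb
    = Rop g0 (nbar_part (bracket (Adinv nb X) Y) - bracket (nbar_part (Adinv nb X)) Y) f nb
      + s * dchi (comp 0 (bracket (Adinv nb X) Y)) * f nb"
proof -
  obtain M where M: "M \<in> nbar \<inter> g0" and nb: "nb = exp_trunc M" and f_nb: "f nb = (f \<circ> mexp) M"
    using assms(1) by (auto simp: Nbar0_def mexp_lowering nbar_iff)
  define A Z where "A = Adinv_exp M X" and "Z = nbar_part A"
  define P Q U where "P = transl_dir M Z" and "Q = transl_dir M Y" and "U = nbar_part (bracket A Y)"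
  have A: "Adinv nb X = A" "A \<in> so8" "bracket A Y \<in> so8"
    using M Adinv_exp_so8 assms(2,3) by (auto simp: nb A_def Adinv_exp_trunc so8_bracket nbar_iff)
  then have nbar: "Z \<in> nbar" "P \<in> nbar" "Q \<in> nbar" "U \<in> nbar"
    using M assms(3) by (simp_all add: Z_def P_def Q_def U_def nbar_transl_dir nbar_part_nbar)
  have "PiOp g0 s X (Rop g0 Y f) nb - Rop g0 Y (PiOp g0 s X f) nb
      = cdd g0 (f \<circ> mexp) M (U + (1/2) *\<^sub>R (bracket M U + bracket Q Z))
        - cdd g0 (f \<circ> mexp) M ((1/2) *\<^sub>R bracket P Y)
        + s * dchi_lin (bracket A Y) * f nb"
    unfolding nb PiOp_Rop_exp_trunc[OF M assms(3,2)] Rop_PiOp_exp_trunc[OF M assms(3,2)]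
      A_def[symmetric] Z_def[symmetric] P_def[symmetric] Q_def[symmetric] U_def[symmetric]
      cdd_commute[OF smooth_chart M nbar(2,3)] f_nb[unfolded nb]
    by (simp add: algebra_simps)
  also have "\<dots> = Rop g0 (U - bracket Z Y) f nb + s * dchi_lin (bracket A Y) * f nb"
    unfolding P_def Q_def nb cdd_transl_dir_commutator[OF M nbar(1) assms(3) nbar(4)] ..
  finally show ?thesis
    using A by (simp add: U_def Z_def dchi_comp_0 dchi_so8)
qed

end

end

theorem proposition5p1:
  fixes g0 :: "cmat set" and f :: "cmat \<Rightarrow> complex" and nb X Y :: cmat
  assumes "heis_real_form g0"
    and "smooth_Nbar0 g0 f"
    and "nb \<in> Nbar0 g0"
    and "X \<in> so8"
    and "Y \<in> Vminus"
  shows "PiOp g0 (-1) X (Rop g0 Y f) nb - Rop g0 Y (PiOp g0 (-1) X f) nb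
         = Rop g0 (comp (-1) (bracket (Adinv nb X) Y)) f nb
           - dchi (comp 0 (bracket (Adinv nb X) Y)) * f nb"
  using real_form.commutator_PiOp_Rop[OF real_form.intro[OF assms(1)] assms(2-4)
      Vminus_nbar[OF assms(5)], of "-1"]
  by (simp add: comp_minus1_bracket_Vminus[OF assms(5)])

end
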